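(* Under the hypotheses of the previous setting (with $\mathsf{ALG}$ a deterministic first-order algorithm making $T=d^{1+\delta/6-o(1)}$ queries, whose output equals its last query, and which outputs an $\epsilon$-optimal point, $\epsilon=1/(d^2L)$, of the random $F_{\mathbf{A},V}$ with probability at least $2/3$), there exists $i\in[N-1]$ such that, with probability at least $3/5$ over uniform $\mathbf{A}$ and $\mathbf{v}_1,\dots,\mathbf{v}_N$, both $t_i\le t_{i+1}\le T$ and $t_{i+1}-t_i\le 20T/N$.
   Context: $F_{\mathbf{A},V}(\mathbf{x})=\frac{1}{\sqrt dL}\max\{L\|\mathbf{A}\mathbf{x}\|_\infty-1,\max_{i\in[N]}(\langle\mathbf{v}_i,\mathbf{x}\rangle-i\gamma)\}$ on $\mathbb{B}^d$, $\mathbf{A}$ uniform in $\{-1,1\}^{(d/2)\times d}$, $\mathbf{v}_i$ independent uniform in $\frac1{\sqrt d}\{-1,1\}^d$, $\gamma=\log^2 d/d^{\delta/4}$, $N=d^{\delta/6}/\log^4 d$, $L=\exp(\log^5 d)$, $d$ sufficiently large, $\delta\in(0,1)$. Oracle returns $F(\mathbf{x})$ and subgradient: $\pm\mathbf{A}_j/\sqrt d$ for the smallest row index attaining the maximum via the $\|\mathbf{A}\mathbf{x}\|_\infty$ term, otherwise $\mathbf{v}_i/(\sqrt dL)$ for the smallest maximizing $i$. Correlation time $t_i$: first round in which $\mathsf{ALG}$ queries $\mathbf{x}$ with $|\langle\mathbf{x},\mathbf{v}_i\rangle|\ge\gamma/4$ and $\|\mathbf{A}\mathbf{x}\|_\infty\le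 2/L$; $t_i=\infty$ if none. *)

theory Defs
  imports "HOL-Analysis.Analysis"
begin

text \<open>Vectors of R^d are functions nat => real vanishing at indices >= d.
  Matrices A (rows j < d div 2) and the family V (vectors v_1..v_N) are
  functions nat => nat => real vanishing outside their index range.\<close>

type_synonym vec = "nat \<Rightarrow> real"
type_synonym resp = "real \<times> vec"

definition ip :: "nat \<Rightarrow> vec \<Rightarrow> vec \<Rightarrow> real" where
  "ip d x y = (\<Sum>k<d. x k * y k)"

definition unit_ball :: "nat \<Rightarrow> vec set" where
  "unit_ball d = {x. (\<forall>k\<ge>d. x k = 0) \<and> (\<Sum>k<d. (x k)\<^sup>2) \<le> 1}"

definition gam :: "real \<Rightarrow> nat \<Rightarrow> real" where
  "gam \<delta> d = (ln (real d))\<^sup>2 / (real d powr (\<delta> / 4))"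

definition NN :: "real \<Rightarrow> nat \<Rightarrow> nat" where
  "NN \<delta> d = nat \<lfloor>real d powr (\<delta> / 6) / (ln (real d)) ^ 4\<rfloor>"

definition LL :: "nat \<Rightarrow> real" where
  "LL d = exp ((ln (real d)) ^ 5)"

definition epsopt :: "nat \<Rightarrow> real" where
  "epsopt d = 1 / ((real d)\<^sup>2 * LL d)"

definition Amats :: "nat \<Rightarrow> (nat \<Rightarrow> nat \<Rightarrow> real) set" where
  "Amats d = {A. (\<forall>j k. j < d div 2 \<and> k < d \<longrightarrow> A j k \<in> {-1, 1}) \<and>
                 (\<forall>j k. \<not> (j < d div 2 \<and> k < d) \<longrightarrow> A j k = 0)}"

definition Vfams :: "nat \<Rightarrow> nat \<Rightarrow> (nat \<Rightarrow> nat \<Rightarrow> real) set" where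
  "Vfams d N = {V. (\<forall>i k. 1 \<le> i \<and> i \<le> N \<and> k < d \<longrightarrow> V i k \<in> {-1 / sqrt (real d), 1 / sqrt (real d)}) \<and>
                   (\<forall>i k. \<not> (1 \<le> i \<and> i \<le> N \<and> k < d) \<longrightarrow> V i k = 0)}"

definition Omega :: "real \<Rightarrow> nat \<Rightarrow> ((nat \<Rightarrow> nat \<Rightarrow> real) \<times> (nat \<Rightarrow> nat \<Rightarrow> real)) set" where
  "Omega \<delta> d = Amats d \<times> Vfams d (NN \<delta> d)"

definition prob_ev :: "real \<Rightarrow> nat \<Rightarrow> ((nat \<Rightarrow> nat \<Rightarrow> real) \<times> (nat \<Rightarrow> nat \<Rightarrow> real) \<Rightarrow> bool) \<Rightarrow> real" where
  "prob_ev \<delta> d P = real (card {\<omega> \<in> Omega \<delta> d. P \<omega>}) / real (card (Omega \<delta> d))"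

definition Ainf :: "nat \<Rightarrow> (nat \<Rightarrow> nat \<Rightarrow> real) \<Rightarrow> vec \<Rightarrow> real" where
  "Ainf d A x = Max ((\<lambda>j. \<bar>ip d (A j) x\<bar>) ` {..<d div 2})"

definition vmax :: "real \<Rightarrow> nat \<Rightarrow> (nat \<Rightarrow> nat \<Rightarrow> real) \<Rightarrow> vec \<Rightarrow> real" where
  "vmax \<delta> d V x = Max ((\<lambda>i. ip d (V i) x - real i * gam \<delta> d) ` {1..NN \<delta> d})"

definition Fhard :: "real \<Rightarrow> nat \<Rightarrow> (nat \<Rightarrow> nat \<Rightarrow> real) \<Rightarrow> (nat \<Rightarrow> nat \<Rightarrow> real) \<Rightarrow> vec \<Rightarrow> real" where
  "Fhard \<delta> d A V x = (1 / (sqrt (real d) * LL d)) *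
      max (LL d * Ainf d A x - 1) (vmax \<delta> d V x)"

text \<open>Subgradient fo_oracle. Ties between the two terms are resolved in favour of the
  ||Ax||_inf term; the sign is + when the inner product is nonnegative.\<close>
definition subgrad :: "real \<Rightarrow> nat \<Rightarrow> (nat \<Rightarrow> nat \<Rightarrow> real) \<Rightarrow> (nat \<Rightarrow> nat \<Rightarrow> real) \<Rightarrow> vec \<Rightarrow> vec" where
  "subgrad \<delta> d A V x =
    (if LL d * Ainf d A x - 1 \<ge> vmax \<delta> d V x then
       (let j = (LEAST j. j < d div 2 \<and> \<bar>ip d (A j) x\<bar> = Ainf d A x);
            s = (if ip d (A j) x \<ge> 0 then 1 else -1 :: real)
        in (\<lambda>k. s * A j k / sqrt (real d)))
     else
       (let i = (LEAST i. 1 \<le> i \<and> i \<le> NN \<delta> d \<and> ip d (V i) x - real i * gam \<delta> d = vmax \<delta> d V x)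
        in (\<lambda>k. V i k / (sqrt (real d) * LL d))))"

definition fo_oracle :: "real \<Rightarrow> nat \<Rightarrow> (nat \<Rightarrow> nat \<Rightarrow> real) \<Rightarrow> (nat \<Rightarrow> nat \<Rightarrow> real) \<Rightarrow> vec \<Rightarrow> resp" where
  "fo_oracle \<delta> d A V x = (Fhard \<delta> d A V x, subgrad \<delta> d A V x)"

text \<open>A deterministic first-order algorithm maps the history of fo_oracle responses to the
  next query. resp_hist gives the responses to the first n queries.\<close>
fun resp_hist :: "(resp list \<Rightarrow> vec) \<Rightarrow> (vec \<Rightarrow> resp) \<Rightarrow> nat \<Rightarrow> resp list" where
  "resp_hist alg orc 0 = []"
| "resp_hist alg orc (Suc n) = resp_hist alg orc n @ [orc (alg (resp_hist alg orc n))]"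

text \<open>The query of round t (t = 1, 2, ...).\<close>
definition query :: "(resp list \<Rightarrow> vec) \<Rightarrow> (vec \<Rightarrow> resp) \<Rightarrow> nat \<Rightarrow> vec" where
  "query alg orc t = alg (resp_hist alg orc (t - 1))"

definition valid_alg :: "nat \<Rightarrow> (resp list \<Rightarrow> vec) \<Rightarrow> bool" where
  "valid_alg d alg = (\<forall>h. alg h \<in> unit_ball d)"

definition corr_time :: "real \<Rightarrow> nat \<Rightarrow> nat \<Rightarrow> (resp list \<Rightarrow> vec) \<Rightarrow>
    (nat \<Rightarrow> nat \<Rightarrow> real) \<Rightarrow> (nat \<Rightarrow> nat \<Rightarrow> real) \<Rightarrow> nat \<Rightarrow> enat" where
  "corr_time \<delta> d T alg A V i =
    (let C = (\<lambda>t. 1 \<le> t \<and> t \<le> T \<and>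
                  \<bar>ip d (query alg (fo_oracle \<delta> d A V) t) (V i)\<bar> \<ge> gam \<delta> d / 4 \<and>
                  Ainf d A (query alg (fo_oracle \<delta> d A V) t) \<le> 2 / LL d)
     in if \<exists>t. C t then enat (LEAST t. C t) else \<infinity>)"

definition eps_optimal_out :: "real \<Rightarrow> nat \<Rightarrow> nat \<Rightarrow> (resp list \<Rightarrow> vec) \<Rightarrow>
    (nat \<Rightarrow> nat \<Rightarrow> real) \<Rightarrow> (nat \<Rightarrow> nat \<Rightarrow> real) \<Rightarrow> bool" where
  "eps_optimal_out \<delta> d T alg A V =
    (\<forall>y \<in> unit_ball d. Fhard \<delta> d A V (query alg (fo_oracle \<delta> d A V) T) \<le> Fhard \<delta> d A V y + epsopt d)"

end

(*
  The run of the algorithm against the family truncated after v_i coincides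
  with the real run until v_i is found, and it is independent of v_(i+1), ..., v_N; by Hoeffding's
  inequality it therefore does not find any of them in T rounds, except with tiny probability. Hence
  with high probability the correlation times are strictly increasing. Moreover, with high probability
  the v_i have little mass on the row space of A and their residuals are almost orthogonal, so some
  unit vector in the kernel of A is negatively correlated with all v_i; an epsilon-optimal output then
  has to find v_N, so t_N <= T. Strictly increasing times in [1, T] have fewer than N/20 gaps longer
  than 20 T / N, and averaging over i gives an index whose gap is short with probability >= 3/5.
*)
theory Submission
  imports Defs "HOL-Real_Asymp.Real_Asymp" "HOL-Probability.Hoeffding"
begin

section \<open>Random sign vectors\<close>

lemma exp_plus_exp_minus_le: "exp a + exp (-a) \<le> 2 * exp (a\<^sup>2 / 2)" for a :: real
proof -
  have nonneg: "exp b + exp (-b) \<le> 2 * exp (b\<^sup>2 / 2)" if "b \<ge> 0" for b :: real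
  proof -
    have "-(2*b) * (1/2) + ln (1 + (1/2) * (exp (2*b) - 1)) \<le> (2*b)\<^sup>2 / 8"
      using Hoeffdings_lemma_aux[of "2*b" "1/2"] that by simp
    hence "ln ((1 + exp (2*b)) / 2) \<le> b + b\<^sup>2/2"
      by (simp add: field_simps power2_eq_square)
    hence "(1 + exp (2*b)) / 2 \<le> exp (b + b\<^sup>2/2)"
      by (smt (verit) exp_gt_zero exp_le_cancel_iff exp_ln)
    hence "exp (-b) * ((1 + exp (2*b)) / 2) \<le> exp (-b) * exp (b + b\<^sup>2/2)"
      by (intro mult_left_mono) auto
    moreover have "exp (-b) * ((1 + exp (2*b)) / 2) = (exp b + exp (-b)) / 2"
      by (simp add: field_simps flip: exp_add)
    moreover have "exp (-b) * exp (b + b\<^sup>2/2) = exp (b\<^sup>2/2)"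
      by (simp flip: exp_add)
    ultimately show ?thesis by simp
  qed
  show ?thesis
  proof (cases "a \<ge> 0")
    case True thus ?thesis using nonneg by blast
  next
    case False thus ?thesis using nonneg[of "-a"] by simp
  qed
qed

definition sign_cube :: "nat \<Rightarrow> real \<Rightarrow> vec set" where
  "sign_cube n c = {u. (\<forall>k<n. u k \<in> {-c, c}) \<and> (\<forall>k\<ge>n. u k = 0)}"

lemma sign_cube_0: "sign_cube 0 c = {\<lambda>k. 0}"
  by (auto simp: sign_cube_def)

lemma sign_cube_Suc: "sign_cube (Suc n) c = (\<lambda>(u,a). u(n:=a)) ` (sign_cube n c \<times> {-c,c})"
proof (intro equalityI subsetI)
  fix w assume w: "w \<in> sign_cube (Suc n) c"
  have "w(n:=0) \<in> sign_cube n c" "w n \<in> {-c,c}" using w by (auto simp: sign_cube_def)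
  moreover have "w = (\<lambda>(u,a). u(n:=a)) (w(n:=0), w n)" by auto
  ultimately show "w \<in> (\<lambda>(u,a). u(n:=a)) ` (sign_cube n c \<times> {-c,c})" by blast
next
  fix w assume "w \<in> (\<lambda>(u,a). u(n:=a)) ` (sign_cube n c \<times> {-c,c})"
  then obtain u a where "u \<in> sign_cube n c" "a \<in> {-c,c}" "w = u(n:=a)" by auto
  thus "w \<in> sign_cube (Suc n) c" by (auto simp: sign_cube_def less_Suc_eq)
qed

lemma inj_on_sign_cube_Suc: "inj_on (\<lambda>(u,a). u(n:=a)) (sign_cube n c \<times> {-c,c})"
proof (rule inj_onI, clarify)
  fix u a u' a'
  assume "u \<in> sign_cube n c" "u' \<in> sign_cube n c" and e: "u(n:=a) = u'(n:=a')"
  hence "u n = 0" "u' n = 0" by (auto simp: sign_cube_def)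
  with e show "u = u' \<and> a = a'"
    by (metis fun_upd_idem fun_upd_same fun_upd_upd)
qed

lemma finite_sign_cube [simp]: "finite (sign_cube n c)"
  by (induction n) (auto simp: sign_cube_0 sign_cube_Suc)

lemma card_sign_cube: "c \<noteq> 0 \<Longrightarrow> card (sign_cube n c) = 2^n"
proof (induction n)
  case 0 thus ?case by (simp add: sign_cube_0)
next
  case (Suc n)
  have "card (sign_cube (Suc n) c) = card (sign_cube n c \<times> {-c,c})"
    unfolding sign_cube_Suc by (rule card_image[OF inj_on_sign_cube_Suc])
  also have "\<dots> = 2^n * 2" using Suc by (simp add: card_cartesian_product)
  finally show ?case by simp
qed

lemma sum_sign_cube_Suc:
  assumes "c \<noteq> 0"
  shows "sum g (sign_cube (Suc n) c) = (\<Sum>u\<in>sign_cube n c. g (u(n:=c)) + g (u(n:=-c)))"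
proof -
  have "sum g (sign_cube (Suc n) c) = (\<Sum>p\<in>sign_cube n c \<times> {-c,c}. g ((\<lambda>(u,a). u(n:=a)) p))"
    unfolding sign_cube_Suc by (rule sum.reindex[OF inj_on_sign_cube_Suc, unfolded comp_def])
  also have "\<dots> = (\<Sum>u\<in>sign_cube n c. \<Sum>a\<in>{-c,c}. g (u(n:=a)))"
    by (simp add: sum.cartesian_product split_def)
  also have "\<dots> = (\<Sum>u\<in>sign_cube n c. g (u(n:=c)) + g (u(n:=-c)))"
    using assms by (intro sum.cong refl) (auto simp: add.commute)
  finally show ?thesis .
qed

lemma sum_prod_sign_cube:
  fixes f :: "nat \<Rightarrow> real \<Rightarrow> real"
  assumes "c \<noteq> 0"
  shows "(\<Sum>u\<in>sign_cube n c. \<Prod>k<n. f k (u k)) = (\<Prod>k<n. f k c + f k (-c))"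
proof (induction n)
  case 0 thus ?case by (simp add: sign_cube_0)
next
  case (Suc n)
  have upd: "(\<Prod>k<Suc n. f k ((u(n:=a)) k)) = (\<Prod>k<n. f k (u k)) * f n a" for u a
  proof -
    have "(\<Prod>k<n. f k ((u(n:=a)) k)) = (\<Prod>k<n. f k (u k))"
      by (intro prod.cong) auto
    thus ?thesis by simp
  qed
  have "(\<Sum>u\<in>sign_cube (Suc n) c. \<Prod>k<Suc n. f k (u k))
      = (\<Sum>u\<in>sign_cube n c. (\<Prod>k<n. f k (u k)) * (f n c + f n (-c)))"
    unfolding sum_sign_cube_Suc[OF assms] upd by (simp add: distrib_left)
  also have "\<dots> = (\<Prod>k<Suc n. f k c + f k (-c))"
    by (simp add: Suc sum_distrib_right[symmetric])
  finally show ?case .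
qed

lemma sum_exp_linear_sign_cube_le:
  assumes "c \<noteq> 0"
  shows "(\<Sum>u\<in>sign_cube n c. exp (l * (\<Sum>k<n. x k * u k)))
        \<le> 2^n * exp (l\<^sup>2 * c\<^sup>2 * (\<Sum>k<n. (x k)\<^sup>2) / 2)"
proof -
  have "(\<Sum>u\<in>sign_cube n c. exp (l * (\<Sum>k<n. x k * u k)))
      = (\<Sum>u\<in>sign_cube n c. \<Prod>k<n. exp (l * x k * u k))"
    by (simp add: exp_sum sum_distrib_left mult.assoc)
  also have "\<dots> = (\<Prod>k<n. exp (l * x k * c) + exp (l * x k * (-c)))"
    by (rule sum_prod_sign_cube[OF assms])
  also have "\<dots> \<le> (\<Prod>k<n. 2 * exp ((l * x k * c)\<^sup>2 / 2))"
    by (intro prod_mono) (use exp_plus_exp_minus_le in \<open>auto simp: add_nonneg_nonneg\<close>)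
  also have "\<dots> = 2^n * exp (\<Sum>k<n. (l * x k * c)\<^sup>2 / 2)"
    by (simp add: prod.distrib exp_sum)
  also have "(\<Sum>k<n. (l * x k * c)\<^sup>2 / 2) = l\<^sup>2 * c\<^sup>2 * (\<Sum>k<n. (x k)\<^sup>2) / 2"
    by (simp add: sum_distrib_left sum_divide_distrib power_mult_distrib algebra_simps)
  finally show ?thesis .
qed

text \<open>Hoeffding's inequality, in counting form, with the Chernoff parameter \<open>l = t / (c\<^sup>2 s)\<close>.\<close>
lemma card_sign_cube_linear_ge:
  assumes "c \<noteq> 0" "t > 0" "s > 0" "(\<Sum>k<n. (x k)\<^sup>2) \<le> s"
  shows "real (card {u\<in>sign_cube n c. (\<Sum>k<n. x k * u k) \<ge> t}) \<le> 2^n * exp (- t\<^sup>2 / (2 * c\<^sup>2 * s))"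
proof -
  define l where "l = t / (c\<^sup>2 * s)"
  have l0: "l > 0" using assms by (simp add: l_def)
  let ?S = "{u\<in>sign_cube n c. (\<Sum>k<n. x k * u k) \<ge> t}"
  have "real (card ?S) * exp (l * t) = (\<Sum>u\<in>?S. exp (l * t))" by simp
  also have "\<dots> \<le> (\<Sum>u\<in>?S. exp (l * (\<Sum>k<n. x k * u k)))"
    by (intro sum_mono) (use l0 in auto)
  also have "\<dots> \<le> (\<Sum>u\<in>sign_cube n c. exp (l * (\<Sum>k<n. x k * u k)))"
    by (intro sum_mono2) auto
  also have "\<dots> \<le> 2^n * exp (l\<^sup>2 * c\<^sup>2 * (\<Sum>k<n. (x k)\<^sup>2) / 2)"
    by (rule sum_exp_linear_sign_cube_le[OF assms(1)])
  also have "\<dots> \<le> 2^n * exp (l\<^sup>2 * c\<^sup>2 * s / 2)"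
    using mult_left_mono[OF assms(4), of "l\<^sup>2 * c\<^sup>2"] by simp
  finally have "real (card ?S) \<le> 2^n * exp (l\<^sup>2 * c\<^sup>2 * s / 2) / exp (l * t)"
    by (simp add: field_simps)
  also have "\<dots> = 2^n * exp (l\<^sup>2 * c\<^sup>2 * s / 2 - l * t)"
    by (simp add: exp_diff)
  also have "l\<^sup>2 * c\<^sup>2 * s / 2 - l * t = - t\<^sup>2 / (2 * c\<^sup>2 * s)"
    using assms by (simp add: l_def field_simps power2_eq_square)
  finally show ?thesis .
qed

lemma card_sign_cube_linear_abs_ge:
  assumes "c \<noteq> 0" "t > 0" "s > 0" "(\<Sum>k<n. (x k)\<^sup>2) \<le> s"
  shows "real (card {u\<in>sign_cube n c. \<bar>\<Sum>k<n. x k * u k\<bar> \<ge> t})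
           \<le> 2 * 2^n * exp (- t\<^sup>2 / (2 * c\<^sup>2 * s))"
proof -
  let ?P = "{u\<in>sign_cube n c. (\<Sum>k<n. x k * u k) \<ge> t}"
  let ?M = "{u\<in>sign_cube n c. (\<Sum>k<n. (- x k) * u k) \<ge> t}"
  have "{u\<in>sign_cube n c. \<bar>\<Sum>k<n. x k * u k\<bar> \<ge> t} \<subseteq> ?P \<union> ?M"
    by (auto simp: sum_negf)
  hence "card {u\<in>sign_cube n c. \<bar>\<Sum>k<n. x k * u k\<bar> \<ge> t} \<le> card (?P \<union> ?M)"
    by (intro card_mono) auto
  also have "\<dots> \<le> card ?P + card ?M"
    by (rule card_Un_le)
  finally have "real (card {u\<in>sign_cube n c. \<bar>\<Sum>k<n. x k * u k\<bar> \<ge> t})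
      \<le> real (card ?P) + real (card ?M)"
    by linarith
  also have "\<dots> \<le> 2^n * exp (- t\<^sup>2 / (2 * c\<^sup>2 * s)) + 2^n * exp (- t\<^sup>2 / (2 * c\<^sup>2 * s))"
    by (intro add_mono card_sign_cube_linear_ge) (use assms in auto)
  finally show ?thesis by simp
qed

lemma sum_sign_cube_flip_eq_0:
  fixes g :: "vec \<Rightarrow> real"
  assumes "j < n" and odd: "\<And>u. u \<in> sign_cube n c \<Longrightarrow> g (u(j := - u j)) = - g u"
  shows "(\<Sum>u\<in>sign_cube n c. g u) = 0"
proof -
  define flip where "flip = (\<lambda>u::vec. u(j := - u j))"
  have flip_flip: "flip (flip u) = u" for u by (auto simp: flip_def)
  have flip_mem: "flip u \<in> sign_cube n c" if "u \<in> sign_cube n c" for u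
    using that assms(1) by (auto simp: sign_cube_def flip_def)
  have inj: "inj_on flip (sign_cube n c)"
    by (rule inj_on_inverseI[where g = flip]) (rule flip_flip)
  have "flip ` sign_cube n c = sign_cube n c"
  proof
    show "flip ` sign_cube n c \<subseteq> sign_cube n c" using flip_mem by auto
    show "sign_cube n c \<subseteq> flip ` sign_cube n c"
    proof
      fix u assume "u \<in> sign_cube n c"
      thus "u \<in> flip ` sign_cube n c"
        by (intro image_eqI[of _ _ "flip u"]) (simp_all add: flip_flip flip_mem)
    qed
  qed
  hence "(\<Sum>u\<in>sign_cube n c. g u) = (\<Sum>u\<in>flip ` sign_cube n c. g u)" by simp
  also have "\<dots> = (\<Sum>u\<in>sign_cube n c. g (flip u))"
    by (rule sum.reindex[OF inj, unfolded comp_def])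
  also have "\<dots> = - (\<Sum>u\<in>sign_cube n c. g u)" using odd by (simp add: flip_def sum_negf)
  finally show ?thesis by simp
qed

lemma sign_cube_mult_self: "u \<in> sign_cube n c \<Longrightarrow> k < n \<Longrightarrow> u k * u k = c * c"
  by (auto simp: sign_cube_def)

text \<open>Fourth moments of Rademacher variables, restricted to pairs \<open>k < l\<close> and \<open>m < p\<close>: only
  equal pairs survive, all other terms contain an unmatched coordinate.\<close>
lemma sum_sign_cube_pair_pair:
  assumes "c \<noteq> 0" "k < l" "l < n" "m < p" "p < n"
  shows "(\<Sum>u\<in>sign_cube n c. u k * u l * (u m * u p)) = (if k = m \<and> l = p then c^4 * 2^n else 0)"
proof (cases "k = m \<and> l = p")
  case True
  have "(\<Sum>u\<in>sign_cube n c. u k * u l * (u m * u p)) = (\<Sum>u\<in>sign_cube n c. c^4)"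
  proof (intro sum.cong refl)
    fix u assume u: "u \<in> sign_cube n c"
    have "u k * u l * (u m * u p) = (u k * u k) * (u l * u l)" using True by simp
    thus "u k * u l * (u m * u p) = c^4"
      using sign_cube_mult_self[OF u, of k] sign_cube_mult_self[OF u, of l] assms
      by (simp add: power4_eq_xxxx)
  qed
  thus ?thesis using True card_sign_cube[OF assms(1)] by simp
next
  case False
  show ?thesis
  proof (cases "k \<noteq> m \<and> k \<noteq> p")
    case True
    have "(\<Sum>u\<in>sign_cube n c. u k * u l * (u m * u p)) = 0"
      by (rule sum_sign_cube_flip_eq_0[of k]) (use True assms in auto)
    thus ?thesis using False by auto
  next
    case k_matched: False
    have "l \<noteq> m \<and> l \<noteq> p" using k_matched False assms by auto
    hence "(\<Sum>u\<in>sign_cube n c. u k * u l * (u m * u p)) = 0"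
      by (intro sum_sign_cube_flip_eq_0[of l]) (use assms in auto)
    thus ?thesis using False by auto
  qed
qed

lemma sum_square_symmetric_split:
  fixes F :: "nat \<Rightarrow> nat \<Rightarrow> real"
  assumes sym: "\<And>k l. F k l = F l k"
  shows "(\<Sum>k<n. \<Sum>l<n. F k l) = (\<Sum>k<n. F k k) + 2 * (\<Sum>l<n. \<Sum>k<l. F k l)"
proof (induction n)
  case 0 thus ?case by simp
next
  case (Suc n)
  have "(\<Sum>k<Suc n. \<Sum>l<Suc n. F k l)
      = (\<Sum>k<n. \<Sum>l<n. F k l) + (\<Sum>k<n. F k n) + (\<Sum>l<n. F n l) + F n n"
    by (simp add: sum.distrib)
  also have "(\<Sum>l<n. F n l) = (\<Sum>k<n. F k n)" using sym by simp
  finally show ?case using Suc by simp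
qed

lemma sum_pairs_indicator:
  fixes h :: "nat \<Rightarrow> nat \<Rightarrow> real"
  assumes "k < l" "l < n"
  shows "(\<Sum>p<n. \<Sum>m<p. h m p * (if k = m \<and> l = p then C else 0)) = h k l * C"
proof -
  have "(\<Sum>p<n. \<Sum>m<p. h m p * (if k = m \<and> l = p then C else 0))
      = (\<Sum>p<n. if p = l then (\<Sum>m<p. h m p * (if k = m then C else 0)) else 0)"
    by (intro sum.cong refl) auto
  also have "\<dots> = (\<Sum>m<l. if m = k then h m l * C else 0)"
    using assms(2) by (simp add: if_distrib cong: if_cong)
  also have "\<dots> = h k l * C" using assms by simp
  finally show ?thesis .
qed

lemma sum_sign_cube_chaos_square:
  fixes Q :: "nat \<Rightarrow> nat \<Rightarrow> real"
  assumes c: "c \<noteq> 0"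
  shows "(\<Sum>u\<in>sign_cube n c. (\<Sum>l<n. \<Sum>k<l. Q k l * u k * u l)\<^sup>2)
        = c^4 * 2^n * (\<Sum>l<n. \<Sum>k<l. (Q k l)\<^sup>2)"
proof -
  have square: "(\<Sum>l<n. \<Sum>k<l. F k l)\<^sup>2 = (\<Sum>l<n. \<Sum>k<l. \<Sum>p<n. \<Sum>m<p. F k l * F m p)"
    for F :: "nat \<Rightarrow> nat \<Rightarrow> real"
    by (simp only: power2_eq_square sum_product) (intro sum.cong refl sum.swap)
  have swap: "(\<Sum>u\<in>S. \<Sum>l<n. \<Sum>k<l. \<Sum>p<n. \<Sum>m<p. G u k l m p)
       = (\<Sum>l<n. \<Sum>k<l. \<Sum>p<n. \<Sum>m<p. \<Sum>u\<in>S. G u k l m p)"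
    for S and G :: "vec \<Rightarrow> nat \<Rightarrow> nat \<Rightarrow> nat \<Rightarrow> nat \<Rightarrow> real"
    by (subst sum.swap) (intro sum.cong refl; subst sum.swap; intro sum.cong refl;
        subst sum.swap; intro sum.cong refl; subst sum.swap; rule refl)
  have "(\<Sum>u\<in>sign_cube n c. (\<Sum>l<n. \<Sum>k<l. Q k l * u k * u l)\<^sup>2)
      = (\<Sum>l<n. \<Sum>k<l. \<Sum>p<n. \<Sum>m<p.
           \<Sum>u\<in>sign_cube n c. (Q k l * Q m p) * (u k * u l * (u m * u p)))"
    unfolding square swap[symmetric] by (intro sum.cong refl) (simp add: algebra_simps)
  also have "\<dots> = (\<Sum>l<n. \<Sum>k<l. \<Sum>p<n. \<Sum>m<p.
           (Q k l * Q m p) * (if k = m \<and> l = p then c^4 * 2^n else 0))"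
    by (intro sum.cong refl) (simp add: sum_distrib_left[symmetric] sum_sign_cube_pair_pair[OF c])
  also have "\<dots> = (\<Sum>l<n. \<Sum>k<l. Q k l * (\<Sum>p<n. \<Sum>m<p.
           Q m p * (if k = m \<and> l = p then c^4 * 2^n else 0)))"
    by (simp add: sum_distrib_left mult.assoc)
  also have "\<dots> = (\<Sum>l<n. \<Sum>k<l. Q k l * (Q k l * (c^4 * 2^n)))"
    by (intro sum.cong refl) (simp add: sum_pairs_indicator)
  also have "\<dots> = c^4 * 2^n * (\<Sum>l<n. \<Sum>k<l. (Q k l)\<^sup>2)"
    by (simp add: sum_distrib_left power2_eq_square algebra_simps)
  finally show ?thesis .
qed

section \<open>Inner products, projections and Gram--Schmidt\<close>

lemma ip_commute: "ip n x y = ip n y x"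
  by (simp add: ip_def mult.commute)

lemma ip_self_nonneg: "ip n x x \<ge> 0"
  by (simp add: ip_def sum_nonneg)

lemma ip_self_eq_0_imp: "ip n x x = 0 \<Longrightarrow> k < n \<Longrightarrow> x k = 0"
  unfolding ip_def by (subst (asm) sum_nonneg_eq_0_iff) auto

lemma ip_divide_left: "ip n (\<lambda>k. x k / s) y = ip n x y / s"
  by (simp add: ip_def sum_divide_distrib)

lemma ip_divide_right: "ip n y (\<lambda>k. x k / s) = ip n y x / s"
  by (simp add: ip_def sum_divide_distrib)

lemma ip_left_combination:
  assumes "\<And>k. k < n \<Longrightarrow> x k = a k - (\<Sum>r<m. c r * g r k)"
  shows "ip n x h = ip n a h - (\<Sum>r<m. c r * ip n (g r) h)"
proof -
  have "ip n x h = (\<Sum>k<n. a k * h k - (\<Sum>r<m. c r * (g r k * h k)))"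
    unfolding ip_def
  proof (intro sum.cong refl)
    fix k assume "k \<in> {..<n}"
    hence "x k = a k - (\<Sum>r<m. c r * g r k)" using assms by simp
    thus "x k * h k = a k * h k - (\<Sum>r<m. c r * (g r k * h k))"
      by (subst \<open>x k = _\<close>) (simp add: sum_distrib_left sum_distrib_right algebra_simps)
  qed
  also have "\<dots> = ip n a h - (\<Sum>k<n. \<Sum>r<m. c r * (g r k * h k))"
    by (simp add: ip_def sum_subtractf)
  also have "(\<Sum>k<n. \<Sum>r<m. c r * (g r k * h k)) = (\<Sum>r<m. c r * ip n (g r) h)"
    unfolding ip_def by (subst sum.swap) (simp add: sum_distrib_left)
  finally show ?thesis .
qed

lemma ip_left_span:
  assumes "\<And>k. k < n \<Longrightarrow> x k = (\<Sum>r<m. c r * g r k)"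
  shows "ip n x h = (\<Sum>r<m. c r * ip n (g r) h)"
  using ip_left_combination[where a = "\<lambda>k. 0" and c = "\<lambda>r. - c r"] assms
  by (simp add: ip_def sum_negf)

lemma ip_right_sum:
  assumes "\<And>k. k < n \<Longrightarrow> z k = (\<Sum>j\<in>J. f j k)"
  shows "ip n h z = (\<Sum>j\<in>J. ip n h (f j))"
proof -
  have "ip n h z = (\<Sum>k<n. \<Sum>j\<in>J. h k * f j k)"
    unfolding ip_def using assms by (intro sum.cong refl) (simp add: sum_distrib_left)
  also have "\<dots> = (\<Sum>j\<in>J. ip n h (f j))" unfolding ip_def by (rule sum.swap)
  finally show ?thesis .
qed

lemma ip_left_sum:
  assumes "\<And>k. k < n \<Longrightarrow> z k = (\<Sum>j\<in>J. f j k)"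
  shows "ip n z h = (\<Sum>j\<in>J. ip n (f j) h)"
  using ip_right_sum[OF assms] by (simp add: ip_commute)

lemma abs_ip_le: "\<bar>ip n x y\<bar> \<le> ip n x x / 2 + ip n y y / 2"
proof -
  have "\<bar>ip n x y\<bar> \<le> (\<Sum>k<n. \<bar>x k * y k\<bar>)" unfolding ip_def by (rule sum_abs)
  also have "\<dots> \<le> (\<Sum>k<n. (x k * x k + y k * y k) / 2)"
  proof (intro sum_mono)
    fix k
    show "\<bar>x k * y k\<bar> \<le> (x k * x k + y k * y k) / 2"
      using sum_squares_bound[of "\<bar>x k\<bar>" "\<bar>y k\<bar>"] by (simp add: abs_mult power2_eq_square)
  qed
  also have "\<dots> = ip n x x / 2 + ip n y y / 2"
    by (simp add: ip_def add_divide_distrib sum.distrib sum_divide_distrib)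
  finally show ?thesis .
qed

definition orthonormal :: "nat \<Rightarrow> nat \<Rightarrow> (nat \<Rightarrow> vec) \<Rightarrow> bool" where
  "orthonormal n R q \<longleftrightarrow> (\<forall>r<R. \<forall>s<R. ip n (q r) (q s) = (if r = s then 1 else 0))"

definition proj_matrix :: "nat \<Rightarrow> (nat \<Rightarrow> vec) \<Rightarrow> nat \<Rightarrow> nat \<Rightarrow> real" where
  "proj_matrix R q k l = (\<Sum>r<R. q r k * q r l)"

lemma proj_matrix_commute: "proj_matrix R q k l = proj_matrix R q l k"
  by (simp add: proj_matrix_def mult.commute)

lemma sum_square_ip_eq_quadratic_form:
  "(\<Sum>r<R. (ip n (q r) u)\<^sup>2) = (\<Sum>k<n. \<Sum>l<n. proj_matrix R q k l * u k * u l)"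
proof -
  have "(\<Sum>r<R. (ip n (q r) u)\<^sup>2) = (\<Sum>r<R. \<Sum>k<n. \<Sum>l<n. (q r k * u k) * (q r l * u l))"
    by (simp only: ip_def power2_eq_square sum_product)
  also have "\<dots> = (\<Sum>k<n. \<Sum>l<n. \<Sum>r<R. (q r k * u k) * (q r l * u l))"
    by (subst sum.swap) (intro sum.cong refl sum.swap)
  also have "\<dots> = (\<Sum>k<n. \<Sum>l<n. proj_matrix R q k l * u k * u l)"
    by (simp add: proj_matrix_def sum_distrib_left sum_distrib_right algebra_simps)
  finally show ?thesis .
qed

lemma trace_proj_matrix:
  assumes "orthonormal n R q"
  shows "(\<Sum>k<n. proj_matrix R q k k) = real R"
proof -
  have "(\<Sum>k<n. proj_matrix R q k k) = (\<Sum>r<R. ip n (q r) (q r))"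
    unfolding proj_matrix_def ip_def by (rule sum.swap)
  also have "\<dots> = real R" using assms by (simp add: orthonormal_def)
  finally show ?thesis .
qed

lemma sum_square_proj_matrix:
  assumes "orthonormal n R q"
  shows "(\<Sum>k<n. \<Sum>l<n. (proj_matrix R q k l)\<^sup>2) = real R"
proof -
  have swap3: "(\<Sum>a\<in>A. \<Sum>b\<in>B. \<Sum>c\<in>C. f a b c) = (\<Sum>b\<in>B. \<Sum>c\<in>C. \<Sum>a\<in>A. (f a b c :: real))"
    for A B C f by (subst sum.swap) (intro sum.cong refl sum.swap)
  have "(\<Sum>k<n. \<Sum>l<n. (proj_matrix R q k l)\<^sup>2)
      = (\<Sum>k<n. \<Sum>l<n. \<Sum>r<R. \<Sum>s<R. (q r k * q r l) * (q s k * q s l))"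
    by (simp only: proj_matrix_def power2_eq_square sum_product)
  also have "\<dots> = (\<Sum>k<n. \<Sum>r<R. \<Sum>s<R. \<Sum>l<n. (q r k * q r l) * (q s k * q s l))"
    by (intro sum.cong refl swap3)
  also have "\<dots> = (\<Sum>r<R. \<Sum>s<R. \<Sum>k<n. \<Sum>l<n. (q r k * q r l) * (q s k * q s l))"
    by (rule swap3)
  also have "\<dots> = (\<Sum>r<R. \<Sum>s<R. ip n (q r) (q s) * ip n (q r) (q s))"
    by (simp add: ip_def sum_product algebra_simps)
  also have "\<dots> = (\<Sum>r<R. \<Sum>s<R. if r = s then 1 else 0)"
    using assms by (intro sum.cong refl) (simp add: orthonormal_def)
  also have "\<dots> = real R" by simp
  finally show ?thesis .
qed

lemma sum_square_ip_sign_cube: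
  assumes q: "orthonormal n R q" and u: "u \<in> sign_cube n c"
  shows "(\<Sum>r<R. (ip n (q r) u)\<^sup>2)
           = c\<^sup>2 * real R + 2 * (\<Sum>l<n. \<Sum>k<l. proj_matrix R q k l * u k * u l)"
proof -
  have "(\<Sum>r<R. (ip n (q r) u)\<^sup>2) = (\<Sum>k<n. \<Sum>l<n. proj_matrix R q k l * u k * u l)"
    by (rule sum_square_ip_eq_quadratic_form)
  also have "\<dots> = (\<Sum>k<n. proj_matrix R q k k * u k * u k)
                   + 2 * (\<Sum>l<n. \<Sum>k<l. proj_matrix R q k l * u k * u l)"
    by (rule sum_square_symmetric_split) (simp add: proj_matrix_commute)
  also have "(\<Sum>k<n. proj_matrix R q k k * u k * u k) = (\<Sum>k<n. c\<^sup>2 * proj_matrix R q k k)"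
    using sign_cube_mult_self[OF u] by (intro sum.cong refl) (simp add: power2_eq_square mult.assoc)
  also have "\<dots> = c\<^sup>2 * real R"
    by (simp add: sum_distrib_left[symmetric] trace_proj_matrix[OF q])
  finally show ?thesis .
qed

lemma sum_off_diagonal_square_proj_matrix_le:
  assumes "orthonormal n R q"
  shows "(\<Sum>l<n. \<Sum>k<l. (proj_matrix R q k l)\<^sup>2) \<le> real R / 2"
proof -
  have "(\<Sum>k<n. \<Sum>l<n. (proj_matrix R q k l)\<^sup>2)
      = (\<Sum>k<n. (proj_matrix R q k k)\<^sup>2) + 2 * (\<Sum>l<n. \<Sum>k<l. (proj_matrix R q k l)\<^sup>2)"
    by (rule sum_square_symmetric_split) (simp add: proj_matrix_commute)
  moreover have "(\<Sum>k<n. (proj_matrix R q k k)\<^sup>2) \<ge> 0" by (intro sum_nonneg) auto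
  ultimately show ?thesis using sum_square_proj_matrix[OF assms] by linarith
qed

text \<open>The mass is \<open>c\<^sup>2 R \<le> 1/2\<close> plus twice an off-diagonal chaos \<open>Y\<close>, to which Chebyshev's
  inequality is applied.\<close>
lemma card_sign_cube_sum_square_ip_gt:
  assumes q: "orthonormal n R q" and n: "n > 0" and R: "2 * R \<le> n" and c: "c\<^sup>2 = 1 / real n"
  shows "real (card {u\<in>sign_cube n c. (\<Sum>r<R. (ip n (q r) u)\<^sup>2) > 3/4}) \<le> 16 / real n * 2^n"
proof -
  define Y where "Y u = (\<Sum>l<n. \<Sum>k<l. proj_matrix R q k l * u k * u l)" for u :: vec
  let ?S = "{u\<in>sign_cube n c. (\<Sum>r<R. (ip n (q r) u)\<^sup>2) > 3/4}"
  have c0: "c \<noteq> 0" using c n by auto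
  have "c\<^sup>2 * real R \<le> 1/2"
    using R n by (simp add: c field_simps)
  hence Y_gt: "Y u > 1/8" if "u \<in> ?S" for u
    using that sum_square_ip_sign_cube[OF q, of u c] by (auto simp: Y_def)
  have "real (card ?S) * (1/64) = (\<Sum>u\<in>?S. 1/64)" by simp
  also have "\<dots> \<le> (\<Sum>u\<in>?S. (Y u)\<^sup>2)"
  proof (intro sum_mono)
    fix u assume "u \<in> ?S"
    hence "1/8 < Y u" by (rule Y_gt)
    hence "(1/8)\<^sup>2 \<le> (Y u)\<^sup>2" by (intro power_mono) auto
    thus "1/64 \<le> (Y u)\<^sup>2" by (simp add: power2_eq_square)
  qed
  also have "\<dots> \<le> (\<Sum>u\<in>sign_cube n c. (Y u)\<^sup>2)" by (intro sum_mono2) auto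
  also have "\<dots> = c^4 * 2^n * (\<Sum>l<n. \<Sum>k<l. (proj_matrix R q k l)\<^sup>2)"
    unfolding Y_def by (rule sum_sign_cube_chaos_square[OF c0])
  also have "\<dots> \<le> c^4 * 2^n * (real n / 4)"
    using sum_off_diagonal_square_proj_matrix_le[OF q] R by (intro mult_left_mono) auto
  also have "c^4 = 1 / (real n)\<^sup>2"
    using c by (metis power2_eq_square power_divide power4_eq_xxxx power_one mult.assoc)
  finally show ?thesis using n by (simp add: field_simps power2_eq_square)
qed

definition in_span :: "nat \<Rightarrow> vec list \<Rightarrow> vec \<Rightarrow> bool" where
  "in_span n qs a \<longleftrightarrow> (\<forall>k<n. a k = (\<Sum>r<length qs. ip n a (qs!r) * (qs!r) k))"

definition proj :: "nat \<Rightarrow> vec list \<Rightarrow> vec \<Rightarrow> vec" where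
  "proj n qs v = (\<lambda>k. if k < n then v k - (\<Sum>r<length qs. ip n v (qs!r) * (qs!r) k) else 0)"

lemma ip_proj_left:
  "ip n (proj n qs v) h = ip n v h - (\<Sum>r<length qs. ip n v (qs!r) * ip n (qs!r) h)"
  by (rule ip_left_combination) (simp add: proj_def)

lemma ip_proj_right:
  "ip n h (proj n qs v) = ip n v h - (\<Sum>r<length qs. ip n v (qs!r) * ip n (qs!r) h)"
  using ip_proj_left ip_commute by metis

lemma ip_proj_self: "ip n v (proj n qs v) = ip n v v - (\<Sum>r<length qs. (ip n (qs!r) v)\<^sup>2)"
  by (simp add: ip_proj_right ip_commute power2_eq_square)

lemma ip_nth_proj:
  assumes "orthonormal n (length qs) ((!) qs)" "s < length qs"
  shows "ip n (qs!s) (proj n qs v) = 0"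
proof -
  have "(\<Sum>r<length qs. ip n v (qs!r) * ip n (qs!r) (qs!s))
      = (\<Sum>r<length qs. if r = s then ip n v (qs!r) else 0)"
    using assms by (intro sum.cong refl) (auto simp: orthonormal_def)
  thus ?thesis using assms(2) by (simp add: ip_proj_right)
qed

lemma ip_proj_proj:
  assumes "orthonormal n (length qs) ((!) qs)"
  shows "ip n (proj n qs u) (proj n qs v) = ip n u (proj n qs v)"
  using ip_nth_proj[OF assms] by (simp add: ip_proj_left)

lemma ip_self_proj_le:
  assumes "orthonormal n (length qs) ((!) qs)"
  shows "ip n (proj n qs v) (proj n qs v) \<le> ip n v v"
  by (simp add: ip_proj_proj[OF assms] ip_proj_self sum_nonneg)

lemma ip_orthogonal_in_span:
  assumes "in_span n qs a" "\<forall>r<length qs. ip n (qs!r) h = 0"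
  shows "ip n a h = 0"
proof -
  have "ip n a h = (\<Sum>r<length qs. ip n a (qs!r) * ip n (qs!r) h)"
    by (rule ip_left_span) (use assms(1) in \<open>auto simp: in_span_def\<close>)
  thus ?thesis using assms(2) by simp
qed

lemma ip_in_span_proj:
  assumes "orthonormal n (length qs) ((!) qs)" "in_span n qs a"
  shows "ip n a (proj n qs v) = 0"
  using assms by (intro ip_orthogonal_in_span) (auto intro: ip_nth_proj)

lemma sum_nth_Cons: "(\<Sum>r<length (q # qs). f ((q # qs)!r)) = f q + (\<Sum>r<length qs. f (qs!r))"
  by (simp only: length_Cons sum.lessThan_Suc_shift nth_Cons_0 nth_Cons_Suc)

lemma in_span_Cons:
  assumes "in_span n qs b" "\<forall>r<length qs. ip n (qs!r) q = 0"
  shows "in_span n (q # qs) b"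
  unfolding in_span_def
proof (intro allI impI)
  fix k assume "k < n"
  moreover have "ip n b q = 0" by (rule ip_orthogonal_in_span[OF assms])
  ultimately show "b k = (\<Sum>r<length (q # qs). ip n b ((q # qs)!r) * ((q # qs)!r) k)"
    using assms(1) unfolding sum_nth_Cons[of "\<lambda>q. ip n b q * q k"] by (simp add: in_span_def)
qed

lemma orthonormal_Cons:
  assumes qs: "orthonormal n (length qs) ((!) qs)"
    and q: "ip n q q = 1" "\<forall>r<length qs. ip n (qs!r) q = 0"
  shows "orthonormal n (length (q # qs)) ((!) (q # qs))"
  unfolding orthonormal_def
proof (intro allI impI)
  fix r s assume rs: "r < length (q # qs)" "s < length (q # qs)"
  have qr: "ip n q (qs!r') = 0" if "r' < length qs" for r'
    using q(2) that ip_commute[of n q "qs!r'"] by simp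
  show "ip n ((q # qs)!r) ((q # qs)!s) = (if r = s then 1 else 0)"
  proof (cases r)
    case 0 thus ?thesis using rs q qr by (cases s) auto
  next
    case (Suc r')
    thus ?thesis using rs qs q by (cases s) (auto simp: orthonormal_def)
  qed
qed

lemma Gram_Schmidt_step:
  assumes qs: "orthonormal n (length qs) ((!) qs)"
    and w: "w = proj n qs a" "ip n w w \<noteq> 0"
  defines "q \<equiv> \<lambda>k. w k / sqrt (ip n w w)"
  shows "orthonormal n (length (q # qs)) ((!) (q # qs))" and "in_span n (q # qs) a"
proof -
  have ww: "ip n w w > 0" using w(2) ip_self_nonneg[of n w] by linarith
  have perp: "\<forall>r<length qs. ip n (qs!r) q = 0"
    using ip_nth_proj[OF qs] w(1) by (simp add: q_def ip_divide_right)
  have "ip n q q = ip n w w / sqrt (ip n w w) / sqrt (ip n w w)"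
    by (simp add: q_def ip_divide_left ip_divide_right)
  also have "\<dots> = 1" using ww by (simp add: field_simps)
  finally show "orthonormal n (length (q # qs)) ((!) (q # qs))"
    by (rule orthonormal_Cons[OF qs _ perp])
  have "ip n w q = ip n a q"
    using w(1) perp by (simp add: ip_proj_left ip_commute[of n q])
  hence aq: "ip n a q = sqrt (ip n w w)"
    using ww by (simp add: q_def ip_divide_right real_div_sqrt)
  show "in_span n (q # qs) a"
    unfolding in_span_def
  proof (intro allI impI)
    fix k assume "k < n"
    hence "a k = w k + (\<Sum>r<length qs. ip n a (qs!r) * (qs!r) k)" by (simp add: w(1) proj_def)
    also have "w k = ip n a q * q k" using aq ww by (simp add: q_def)
    finally show "a k = (\<Sum>r<length (q # qs). ip n a ((q # qs)!r) * ((q # qs)!r) k)"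
      unfolding sum_nth_Cons[of "\<lambda>q. ip n a q * q k"] .
  qed
qed

fun Gram_Schmidt :: "nat \<Rightarrow> vec list \<Rightarrow> vec list" where
  "Gram_Schmidt n [] = []"
| "Gram_Schmidt n (a # as) = (let qs = Gram_Schmidt n as; w = proj n qs a
    in if ip n w w = 0 then qs else (\<lambda>k. w k / sqrt (ip n w w)) # qs)"

lemma in_span_if_proj_eq_0:
  assumes "ip n (proj n qs a) (proj n qs a) = 0"
  shows "in_span n qs a"
  unfolding in_span_def
proof (intro allI impI)
  fix k assume "k < n"
  with ip_self_eq_0_imp[OF assms this] show "a k = (\<Sum>r<length qs. ip n a (qs!r) * (qs!r) k)"
    by (simp add: proj_def)
qed

lemma Gram_Schmidt_correct:
  "orthonormal n (length (Gram_Schmidt n as)) ((!) (Gram_Schmidt n as))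
   \<and> length (Gram_Schmidt n as) \<le> length as
   \<and> (\<forall>a\<in>set as. in_span n (Gram_Schmidt n as) a)"
proof (induction as)
  case Nil thus ?case by (simp add: orthonormal_def)
next
  case (Cons a as)
  define qs where "qs = Gram_Schmidt n as"
  define w where "w = proj n qs a"
  define q where "q = (\<lambda>k. w k / sqrt (ip n w w))"
  have IH: "orthonormal n (length qs) ((!) qs)" "length qs \<le> length as"
    "\<forall>b\<in>set as. in_span n qs b"
    using Cons.IH by (auto simp: qs_def)
  show ?case
  proof (cases "ip n w w = 0")
    case True
    thus ?thesis using IH in_span_if_proj_eq_0[of n qs a] by (simp add: qs_def w_def Let_def)
  next
    case False
    note step = Gram_Schmidt_step[OF IH(1) w_def False]
    have "\<forall>r<length qs. ip n (qs!r) q = 0"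
      using ip_nth_proj[OF IH(1)] by (simp add: q_def w_def ip_divide_right)
    hence "\<forall>b\<in>set as. in_span n (q # qs) b" using IH(3) in_span_Cons by blast
    thus ?thesis using False IH step by (simp add: qs_def w_def q_def Let_def)
  qed
qed

lemma ip_sum_proj_bounds:
  fixes V :: "nat \<Rightarrow> vec" and N :: nat
  assumes N: "N \<ge> 1" and i: "i \<in> {1..N}"
    and unit: "ip n (V i) (V i) = 1"
    and span_small: "(\<Sum>r<length qs. (ip n (qs!r) (V i))\<^sup>2) \<le> 3/4"
    and cross_small: "\<And>j. j \<in> {1..N} \<Longrightarrow> i \<noteq> j \<Longrightarrow> \<bar>ip n (V i) (proj n qs (V j))\<bar> \<le> 1 / (8 * N)"
    and z: "\<And>k. k < n \<Longrightarrow> z k = (\<Sum>j\<in>{1..N}. proj n qs (V j) k)"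
  shows "1/8 \<le> ip n (V i) z \<and> ip n (V i) z \<le> 9/8"
proof -
  have "ip n (V i) z = ip n (V i) (proj n qs (V i)) + (\<Sum>j\<in>{1..N}-{i}. ip n (V i) (proj n qs (V j)))"
    using i by (simp add: ip_right_sum[OF z] sum.remove)
  moreover have "1/4 \<le> ip n (V i) (proj n qs (V i))" "ip n (V i) (proj n qs (V i)) \<le> 1"
    using ip_proj_self[of n "V i" qs] unit span_small by (auto intro: sum_nonneg)
  moreover have "\<bar>\<Sum>j\<in>{1..N}-{i}. ip n (V i) (proj n qs (V j))\<bar> \<le> 1/8"
  proof -
    have "\<bar>\<Sum>j\<in>{1..N}-{i}. ip n (V i) (proj n qs (V j))\<bar> \<le> (\<Sum>j\<in>{1..N}-{i}. 1 / (8 * N))"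
      by (rule order_trans[OF sum_abs sum_mono]) (use cross_small in auto)
    also have "\<dots> = real (N - 1) / (8 * N)" using i by (simp add: card_Diff_singleton)
    also have "\<dots> \<le> 1/8" using N by (simp add: field_simps)
    finally show ?thesis .
  qed
  ultimately show ?thesis by linarith
qed

lemma ip_self_sum_proj:
  assumes qs: "orthonormal n (length qs) ((!) qs)"
    and z: "\<And>k. k < n \<Longrightarrow> z k = (\<Sum>j\<in>J. proj n qs (V j) k)"
  shows "ip n z z = (\<Sum>j\<in>J. ip n (V j) z)"
proof -
  have "ip n z z = (\<Sum>j\<in>J. ip n (proj n qs (V j)) z)" by (rule ip_left_sum[OF z])
  also have "\<dots> = (\<Sum>j\<in>J. ip n (V j) z)" by (simp add: ip_right_sum[OF z] ip_proj_proj[OF qs])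
  finally show ?thesis .
qed

text \<open>The normalised negative of \<open>z = \<Sigma>\<^sub>j proj (V j)\<close> is the unit vector orthogonal to the span
  of \<open>qs\<close> that is negatively correlated with every \<open>V i\<close>; its norm is controlled through
  \<open>\<langle>z, z\<rangle> = \<Sigma>\<^sub>i \<langle>V i, z\<rangle>\<close>.\<close>
lemma good_direction:
  fixes V :: "nat \<Rightarrow> vec" and N :: nat
  assumes qs: "orthonormal n (length qs) ((!) qs)" and N: "N \<ge> 1"
    and unit: "\<And>i. i \<in> {1..N} \<Longrightarrow> ip n (V i) (V i) = 1"
    and span_small: "\<And>i. i \<in> {1..N} \<Longrightarrow> (\<Sum>r<length qs. (ip n (qs!r) (V i))\<^sup>2) \<le> 3/4"
    and cross_small: "\<And>i j. i \<in> {1..N} \<Longrightarrow> j \<in> {1..N} \<Longrightarrow> i \<noteq> j \<Longrightarrow>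
                        \<bar>ip n (V j) (proj n qs (V i))\<bar> \<le> 1 / (8 * N)"
  obtains y where "\<forall>k\<ge>n. y k = 0" "ip n y y = 1" "\<forall>a. in_span n qs a \<longrightarrow> ip n a y = 0"
    "\<forall>i\<in>{1..N}. ip n (V i) y \<le> - 1 / (9 * sqrt N)"
proof -
  define z where "z = (\<lambda>k. \<Sum>j\<in>{1..N}. proj n qs (V j) k)"
  have bounds: "1/8 \<le> ip n (V i) z \<and> ip n (V i) z \<le> 9/8" if "i \<in> {1..N}" for i
    by (rule ip_sum_proj_bounds[where V = V and qs = qs and n = n])
       (use N that unit span_small cross_small in \<open>auto simp: z_def\<close>)
  have ip_z: "ip n h z = (\<Sum>j\<in>{1..N}. ip n h (proj n qs (V j)))" for h
    by (rule ip_right_sum) (simp add: z_def)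
  have zz: "ip n z z = (\<Sum>i\<in>{1..N}. ip n (V i) z)"
    by (rule ip_self_sum_proj[OF qs]) (simp add: z_def)
  have "real N / 8 \<le> ip n z z" "ip n z z \<le> 9 * real N / 8"
    using sum_mono[of "{1..N}" "\<lambda>_. 1/8" "\<lambda>i. ip n (V i) z"]
      sum_mono[of "{1..N}" "\<lambda>i. ip n (V i) z" "\<lambda>_. 9/8"] bounds by (auto simp: zz)
  moreover have "real N / 8 > 0" using N by simp
  ultimately have z_pos: "ip n z z > 0" and "ip n z z \<le> (9/8)\<^sup>2 * real N"
    by (auto simp: power2_eq_square)
  hence s_le: "sqrt (ip n z z) \<le> 9/8 * sqrt N"
    using real_sqrt_le_mono by (fastforce simp: real_sqrt_mult)
  define s where "s = sqrt (ip n z z)"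
  have s0: "s > 0" using z_pos by (simp add: s_def)
  define y where "y = (\<lambda>k. - z k / s)"
  have ip_y: "ip n h y = - ip n h z / s" for h
    by (simp add: y_def ip_def sum_divide_distrib sum_negf)
  show thesis
  proof
    show "\<forall>k\<ge>n. y k = 0" by (simp add: y_def z_def proj_def)
    show "ip n y y = 1" using z_pos by (simp add: ip_y ip_commute[of n y] s_def)
    show "\<forall>a. in_span n qs a \<longrightarrow> ip n a y = 0"
      using ip_in_span_proj[OF qs] by (simp add: ip_y ip_z)
    show "\<forall>i\<in>{1..N}. ip n (V i) y \<le> - 1 / (9 * sqrt N)"
    proof
      fix i assume "i \<in> {1..N}"
      have "1 / (9 * sqrt N) = (1/8) / (9/8 * sqrt N)" by simp
      also have "\<dots> \<le> (1/8) / s" using s0 s_le by (simp add: s_def frac_le)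
      also have "\<dots> \<le> ip n (V i) z / s"
        using bounds[OF \<open>i \<in> {1..N}\<close>] s0 by (intro divide_right_mono) auto
      finally have "1 / (9 * sqrt N) \<le> ip n (V i) z / s" .
      thus "ip n (V i) y \<le> - 1 / (9 * sqrt N)" by (simp add: ip_y)
    qed
  qed
qed

section \<open>Locality of the oracle\<close>

lemma LL_pos: "LL d > 0"
  by (simp add: LL_def)

lemma ip_self_le_1_if_unit_ball: "x \<in> unit_ball d \<Longrightarrow> ip d x x \<le> 1"
  by (simp add: unit_ball_def ip_def power2_eq_square)

lemma ip_self_query_le_1: "valid_alg d alg \<Longrightarrow> ip d (query alg orc t) (query alg orc t) \<le> 1"
  by (simp add: valid_alg_def query_def ip_self_le_1_if_unit_ball)

lemma query_Suc: "query alg orc (Suc n) = alg (resp_hist alg orc n)"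
  by (simp add: query_def)

lemma Vfams_ip_self:
  assumes "V \<in> Vfams d N" "1 \<le> m" "m \<le> N" "d > 0"
  shows "ip d (V m) (V m) = 1"
proof -
  have "V m k * V m k = 1 / real d" if "k < d" for k
  proof -
    have "V m k \<in> {-1 / sqrt (real d), 1 / sqrt (real d)}"
      using assms that by (auto simp: Vfams_def)
    thus ?thesis using assms(4) by (auto simp: power2_eq_square[symmetric] power_divide)
  qed
  thus ?thesis using assms(4) by (simp add: ip_def)
qed

lemma vmax_le_if_ip_le:
  assumes N: "1 \<le> NN \<delta> d" and \<gamma>: "0 \<le> gam \<delta> d"
    and V: "\<And>m. m \<in> {1..NN \<delta> d} \<Longrightarrow> ip d (V m) x \<le> b"
  shows "vmax \<delta> d V x \<le> b - gam \<delta> d"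
  unfolding vmax_def
proof (subst Max_le_iff, safe)
  fix m assume m: "m \<in> {1..NN \<delta> d}"
  have "gam \<delta> d \<le> real m * gam \<delta> d" using m \<gamma> by (simp add: mult_le_cancel_right1)
  thus "ip d (V m) x - real m * gam \<delta> d \<le> b - gam \<delta> d" using V[OF m] by simp
qed (use N in auto)

lemma vmax_le_1:
  assumes x: "ip d x x \<le> 1" and N: "NN \<delta> d \<ge> 1" and \<gamma>: "gam \<delta> d \<ge> 0"
    and V: "\<And>m. 1 \<le> m \<Longrightarrow> m \<le> NN \<delta> d \<Longrightarrow> ip d (V m) (V m) \<le> 1"
  shows "vmax \<delta> d V x \<le> 1"
proof -
  have "ip d (V m) x \<le> 1" if "m \<in> {1..NN \<delta> d}" for m
  proof -
    have "ip d (V m) (V m) \<le> 1" using V that by simp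
    thus ?thesis using abs_ip_le[of d "V m" x] x by linarith
  qed
  thus ?thesis using vmax_le_if_ip_le[OF N \<gamma>, of V x 1] \<gamma> by simp
qed

lemma fo_oracle_eq_if_Ainf_gt:
  assumes A: "Ainf d A x > 2 / LL d" and "vmax \<delta> d V x \<le> 1" "vmax \<delta> d V' x \<le> 1"
  shows "fo_oracle \<delta> d A V x = fo_oracle \<delta> d A V' x"
proof -
  have "LL d * Ainf d A x > 2" using A LL_pos[of d] by (simp add: field_simps)
  hence "LL d * Ainf d A x - 1 \<ge> vmax \<delta> d V x" "LL d * Ainf d A x - 1 \<ge> vmax \<delta> d V' x"
    using assms by linarith+
  thus ?thesis by (simp add: fo_oracle_def Fhard_def subgrad_def max_def)
qed

definition trunc :: "nat \<Rightarrow> (nat \<Rightarrow> vec) \<Rightarrow> nat \<Rightarrow> vec" where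
  "trunc i V = (\<lambda>m. if m \<le> i then V m else (\<lambda>k. 0))"

lemma trunc_fun_upd: "i < j \<Longrightarrow> trunc i (V(j := u)) = trunc i V"
  by (auto simp: trunc_def fun_eq_iff)

lemma ip_self_trunc_le_1:
  assumes "V \<in> Vfams d (NN \<delta> d)" "1 \<le> m" "m \<le> NN \<delta> d" "d > 0"
  shows "ip d (trunc i V m) (trunc i V m) \<le> 1"
  using Vfams_ip_self[OF assms] by (simp add: trunc_def ip_def)

lemma Max_image_eq_Max_image_prefix:
  fixes f :: "nat \<Rightarrow> 'a::linorder"
  assumes "1 \<le> i" "i \<le> N" and lt: "\<And>m. i < m \<Longrightarrow> m \<le> N \<Longrightarrow> f m < f i"
  shows "Max (f ` {1..N}) = Max (f ` {1..i})"
proof (rule antisym)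
  show "Max (f ` {1..N}) \<le> Max (f ` {1..i})"
  proof (subst Max_le_iff, safe)
    fix m assume "m \<in> {1..N}"
    moreover have "f i \<le> Max (f ` {1..i})" using assms by simp
    ultimately show "f m \<le> Max (f ` {1..i})"
      using lt[of m] by (cases "m \<le> i") (auto simp: less_imp_le)
  qed (use assms in auto)
  show "Max (f ` {1..i}) \<le> Max (f ` {1..N})"
    using assms by (intro Max_mono) auto
qed

lemma Max_image_eq_if_prefix_dominates:
  fixes f g :: "nat \<Rightarrow> real"
  assumes i: "1 \<le> i" "i \<le> N" and eq: "\<And>m. m \<le> i \<Longrightarrow> f m = g m"
    and f_lt: "\<And>m. i < m \<Longrightarrow> m \<le> N \<Longrightarrow> f m < f i"
    and g_lt: "\<And>m. i < m \<Longrightarrow> m \<le> N \<Longrightarrow> g m < g i"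
  shows "Max (f ` {1..N}) = Max (g ` {1..N})"
    and "m \<le> N \<Longrightarrow> f m = Max (f ` {1..N}) \<Longrightarrow> m \<le> i"
proof -
  have "f ` {1..i} = g ` {1..i}" using eq by (auto simp: image_def)
  thus "Max (f ` {1..N}) = Max (g ` {1..N})"
    using Max_image_eq_Max_image_prefix[of i N f, OF i f_lt]
      Max_image_eq_Max_image_prefix[of i N g, OF i g_lt]
    by simp
  show "m \<le> i" if "m \<le> N" "f m = Max (f ` {1..N})"
  proof (rule ccontr)
    assume "\<not> m \<le> i"
    hence "f m < f i" using f_lt that(1) by simp
    moreover have "f i \<le> Max (f ` {1..N})" using i by simp
    ultimately show False using that(2) by simp
  qed
qed

lemma vmax_trunc:
  assumes \<gamma>: "gam \<delta> d > 0" and i: "1 \<le> i" "i \<le> NN \<delta> d"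
    and x_i: "\<bar>ip d x (V i)\<bar> < gam \<delta> d / 4"
    and x_later: "\<And>j. i < j \<Longrightarrow> j \<le> NN \<delta> d \<Longrightarrow> \<bar>ip d x (V j)\<bar> < gam \<delta> d / 4"
  defines "score W m \<equiv> ip d (W m) x - real m * gam \<delta> d"
  shows "vmax \<delta> d (trunc i V) x = vmax \<delta> d V x"
    and "m \<le> NN \<delta> d \<Longrightarrow> score V m = vmax \<delta> d V x \<Longrightarrow> m \<le> i"
    and "m \<le> NN \<delta> d \<Longrightarrow> score (trunc i V) m = vmax \<delta> d (trunc i V) x \<Longrightarrow> m \<le> i"
proof -
  have later: "real m * gam \<delta> d \<ge> (real i + 1) * gam \<delta> d" if "i < m" for m
    using that \<gamma> by (intro mult_right_mono) auto
  have score_i: "score V i > - gam \<delta> d / 4 - real i * gam \<delta> d"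
    using x_i by (simp add: score_def ip_commute[of d x] abs_less_iff)
  have V_lt: "score V m < score V i" if "i < m" "m \<le> NN \<delta> d" for m
    using x_later[OF that] later[OF that(1)] score_i
    by (simp add: score_def ip_commute[of d x] abs_less_iff algebra_simps)
  have trunc_lt: "score (trunc i V) m < score (trunc i V) i" if "i < m" "m \<le> NN \<delta> d" for m
    using later[OF that(1)] score_i \<gamma> that(1)
    by (simp add: score_def trunc_def ip_def algebra_simps)
  have eq: "score V m = score (trunc i V) m" if "m \<le> i" for m
    using that by (simp add: score_def trunc_def)
  have eq': "score (trunc i V) m = score V m" if "m \<le> i" for m
    using eq[OF that] by simp
  note prefix = Max_image_eq_if_prefix_dominates[of i _ "score V" "score (trunc i V)", OF i eq V_lt trunc_lt]
  note prefix' = Max_image_eq_if_prefix_dominates[of i _ "score (trunc i V)" "score V", OF i eq' trunc_lt V_lt]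
  have vmax: "vmax \<delta> d W x = Max (score W ` {1..NN \<delta> d})" for W
    by (simp add: vmax_def score_def)
  show "vmax \<delta> d (trunc i V) x = vmax \<delta> d V x"
    unfolding vmax using prefix(1) by simp
  show "m \<le> i" if "m \<le> NN \<delta> d" "score V m = vmax \<delta> d V x"
    using prefix(2) that unfolding vmax by blast
  show "m \<le> i" if "m \<le> NN \<delta> d" "score (trunc i V) m = vmax \<delta> d (trunc i V) x"
    using prefix'(2) that unfolding vmax by blast
qed

lemma fo_oracle_trunc_eq:
  assumes \<gamma>: "gam \<delta> d > 0" and i: "1 \<le> i" "i \<le> NN \<delta> d"
    and x_i: "\<bar>ip d x (V i)\<bar> < gam \<delta> d / 4"
    and x_later: "\<And>j. i < j \<Longrightarrow> j \<le> NN \<delta> d \<Longrightarrow> \<bar>ip d x (V j)\<bar> < gam \<delta> d / 4"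
  shows "fo_oracle \<delta> d A (trunc i V) x = fo_oracle \<delta> d A V x"
proof -
  define P where "P W m \<longleftrightarrow> 1 \<le> m \<and> m \<le> NN \<delta> d \<and>
    ip d (W m) x - real m * gam \<delta> d = vmax \<delta> d W x" for W m
  note tr = vmax_trunc[where V = V and x = x, OF \<gamma> i x_i x_later]
  have P_le: "P V m \<Longrightarrow> m \<le> i" "P (trunc i V) m \<Longrightarrow> m \<le> i" for m
  proof -
    show "m \<le> i" if "P V m"
      using tr(2)[of m] that by (simp add: P_def)
    show "m \<le> i" if "P (trunc i V) m"
      using tr(3)[of m] that by (simp add: P_def)
  qed
  have P_eq: "P (trunc i V) m = P V m" for m
  proof (cases "m \<le> i")
    case True thus ?thesis using tr(1) by (simp add: P_def trunc_def)
  next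
    case False thus ?thesis using P_le[of m] by blast
  qed
  have "\<exists>m. P V m"
  proof -
    have "vmax \<delta> d V x \<in> (\<lambda>m. ip d (V m) x - real m * gam \<delta> d) ` {1..NN \<delta> d}"
      unfolding vmax_def using i by (intro Max_in) auto
    thus ?thesis by (auto simp: P_def)
  qed
  hence "(LEAST m. P V m) \<le> i" by (rule P_le(1)[OF LeastI_ex])
  hence "trunc i V (LEAST m. P V m) = V (LEAST m. P V m)" by (simp add: trunc_def)
  with tr(1) P_eq[abs_def] show ?thesis
    by (simp add: fo_oracle_def Fhard_def subgrad_def P_def[abs_def] Let_def)
qed

definition correlated :: "real \<Rightarrow> nat \<Rightarrow> (nat \<Rightarrow> nat \<Rightarrow> real) \<Rightarrow> (nat \<Rightarrow> nat \<Rightarrow> real) \<Rightarrow> nat \<Rightarrow> vec \<Rightarrow> bool"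
  where "correlated \<delta> d A V i x \<longleftrightarrow> gam \<delta> d / 4 \<le> \<bar>ip d x (V i)\<bar> \<and> Ainf d A x \<le> 2 / LL d"

text \<open>Either \<open>\<parallel>A x\<parallel>\<^sub>\<infinity>\<close> dominates both objectives, or the maximising index of the
  \<open>v\<close>-part is at most \<open>i\<close>.\<close>
lemma fo_oracle_trunc_eq_if_not_correlated:
  assumes V: "V \<in> Vfams d (NN \<delta> d)" and d: "d > 0" and \<gamma>: "gam \<delta> d > 0"
    and i: "1 \<le> i" "i \<le> NN \<delta> d" and x: "ip d x x \<le> 1"
    and not_corr: "\<not> correlated \<delta> d A V i x"
    and x_later: "\<And>j. i < j \<Longrightarrow> j \<le> NN \<delta> d \<Longrightarrow> \<bar>ip d x (V j)\<bar> < gam \<delta> d / 4"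
  shows "fo_oracle \<delta> d A (trunc i V) x = fo_oracle \<delta> d A V x"
proof (cases "Ainf d A x > 2 / LL d")
  case True
  have N: "NN \<delta> d \<ge> 1" using i by simp
  show ?thesis
  proof (rule fo_oracle_eq_if_Ainf_gt[OF True])
    show "vmax \<delta> d (trunc i V) x \<le> 1"
      by (rule vmax_le_1[OF x N]) (use \<gamma> ip_self_trunc_le_1[OF V _ _ d] in auto)
    show "vmax \<delta> d V x \<le> 1"
      by (rule vmax_le_1[OF x N]) (use \<gamma> Vfams_ip_self[OF V _ _ d] in auto)
  qed
next
  case False
  hence "\<bar>ip d x (V i)\<bar> < gam \<delta> d / 4" using not_corr by (auto simp: correlated_def)
  thus ?thesis by (rule fo_oracle_trunc_eq[where V = V, OF \<gamma> i _ x_later])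
qed

lemma corr_time_eq:
  "corr_time \<delta> d T alg A V i =
    (if \<exists>t. 1 \<le> t \<and> t \<le> T \<and> correlated \<delta> d A V i (query alg (fo_oracle \<delta> d A V) t)
     then enat (LEAST t. 1 \<le> t \<and> t \<le> T \<and> correlated \<delta> d A V i (query alg (fo_oracle \<delta> d A V) t))
     else \<infinity>)"
  unfolding corr_time_def correlated_def Let_def ..

lemma corr_time_le_enat:
  assumes "1 \<le> t" "t \<le> T" "correlated \<delta> d A V i (query alg (fo_oracle \<delta> d A V) t)"
  shows "corr_time \<delta> d T alg A V i \<le> enat t"
  using assms by (auto simp: corr_time_eq intro: Least_le)

lemma corr_time_eq_enatD:
  assumes "corr_time \<delta> d T alg A V i = enat b"
  shows "1 \<le> b \<and> b \<le> T \<and> correlated \<delta> d A V i (query alg (fo_oracle \<delta> d A V) b)"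
proof -
  let ?C = "\<lambda>t. 1 \<le> t \<and> t \<le> T \<and> correlated \<delta> d A V i (query alg (fo_oracle \<delta> d A V) t)"
  have "\<exists>t. ?C t" and "b = (LEAST t. ?C t)"
    using assms by (auto simp: corr_time_eq split: if_splits)
  thus ?thesis using LeastI_ex[of ?C] by simp
qed

lemma corr_time_le_T:
  "corr_time \<delta> d T alg A V i \<noteq> \<infinity> \<Longrightarrow> corr_time \<delta> d T alg A V i \<le> enat T"
  using corr_time_eq_enatD by (cases "corr_time \<delta> d T alg A V i") auto

text \<open>The paper's event "not \<open>G\<^sub>i\<close>": the run of the algorithm against \<open>trunc i V\<close> never finds any
  of \<open>v\<^sub>i\<^sub>+\<^sub>1, \<dots>, v\<^sub>N\<close> within \<open>T\<close> rounds.\<close>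
definition trunc_run_uncorrelated ::
    "real \<Rightarrow> nat \<Rightarrow> nat \<Rightarrow> (resp list \<Rightarrow> vec) \<Rightarrow> (nat \<Rightarrow> nat \<Rightarrow> real) \<Rightarrow> (nat \<Rightarrow> nat \<Rightarrow> real) \<Rightarrow> nat \<Rightarrow> bool"
  where "trunc_run_uncorrelated \<delta> d T alg A V i \<longleftrightarrow>
    (\<forall>t\<in>{1..T}. \<forall>j\<in>{i<..NN \<delta> d}.
       \<bar>ip d (query alg (fo_oracle \<delta> d A (trunc i V)) t) (V j)\<bar> < gam \<delta> d / 4)"

lemma resp_hist_trunc_eq:
  assumes valid: "valid_alg d alg" and V: "V \<in> Vfams d (NN \<delta> d)" and d: "d > 0"
    and \<gamma>: "gam \<delta> d > 0" and i: "1 \<le> i" "i \<le> NN \<delta> d"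
    and unc: "trunc_run_uncorrelated \<delta> d T alg A V i"
  shows "n \<le> T \<Longrightarrow> (\<And>t. 1 \<le> t \<Longrightarrow> t \<le> n \<Longrightarrow> \<not> correlated \<delta> d A V i (query alg (fo_oracle \<delta> d A V) t))
    \<Longrightarrow> resp_hist alg (fo_oracle \<delta> d A (trunc i V)) n = resp_hist alg (fo_oracle \<delta> d A V) n"
proof (induction n)
  case 0 thus ?case by simp
next
  case (Suc n)
  hence IH: "resp_hist alg (fo_oracle \<delta> d A (trunc i V)) n = resp_hist alg (fo_oracle \<delta> d A V) n"
    by simp
  define x where "x = query alg (fo_oracle \<delta> d A V) (Suc n)"
  have x_trunc: "query alg (fo_oracle \<delta> d A (trunc i V)) (Suc n) = x"
    by (simp add: query_Suc x_def IH)
  have "fo_oracle \<delta> d A (trunc i V) x = fo_oracle \<delta> d A V x"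
  proof (rule fo_oracle_trunc_eq_if_not_correlated[OF V d \<gamma> i])
    show "ip d x x \<le> 1" unfolding x_def by (rule ip_self_query_le_1[OF valid])
    show "\<not> correlated \<delta> d A V i x" using Suc.prems(2)[of "Suc n"] by (simp add: x_def)
    show "\<bar>ip d x (V j)\<bar> < gam \<delta> d / 4" if "i < j" "j \<le> NN \<delta> d" for j
      using unc Suc.prems(1) that x_trunc by (auto simp: trunc_run_uncorrelated_def)
  qed
  thus ?case using IH x_trunc by (simp add: x_def query_Suc)
qed

text \<open>Outside the event \<open>G\<^sub>i\<close> the vector \<open>v\<^sub>i\<^sub>+\<^sub>1\<close> cannot be found before \<open>v\<^sub>i\<close>: up to that time the
  real run coincides with the run against \<open>trunc i V\<close>, which never correlates with \<open>v\<^sub>i\<^sub>+\<^sub>1\<close>.\<close>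
lemma corr_time_less_Suc:
  assumes valid: "valid_alg d alg" and V: "V \<in> Vfams d (NN \<delta> d)" and d: "d > 0"
    and \<gamma>: "gam \<delta> d > 0" and i: "1 \<le> i" "i + 1 \<le> NN \<delta> d"
    and unc: "trunc_run_uncorrelated \<delta> d T alg A V i"
    and fin: "corr_time \<delta> d T alg A V (i + 1) \<noteq> \<infinity>"
  shows "corr_time \<delta> d T alg A V i < corr_time \<delta> d T alg A V (i + 1)"
proof (rule ccontr)
  assume not_less: "\<not> ?thesis"
  obtain b where b: "corr_time \<delta> d T alg A V (i + 1) = enat b" using fin by auto
  note b_corr = corr_time_eq_enatD[OF b]
  have "resp_hist alg (fo_oracle \<delta> d A (trunc i V)) (b - 1) = resp_hist alg (fo_oracle \<delta> d A V) (b - 1)"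
  proof (rule resp_hist_trunc_eq[OF valid V d \<gamma> i(1) _ unc])
    show "i \<le> NN \<delta> d" "b - 1 \<le> T" using i b_corr by auto
    show "\<not> correlated \<delta> d A V i (query alg (fo_oracle \<delta> d A V) t)" if t: "1 \<le> t" "t \<le> b - 1" for t
    proof
      assume "correlated \<delta> d A V i (query alg (fo_oracle \<delta> d A V) t)"
      hence "corr_time \<delta> d T alg A V i \<le> enat t"
        using t b_corr by (intro corr_time_le_enat) auto
      also have "enat t < enat b" using t b_corr by simp
      finally show False using not_less b by simp
    qed
  qed
  hence "query alg (fo_oracle \<delta> d A (trunc i V)) b = query alg (fo_oracle \<delta> d A V) b"
    by (simp add: query_def)
  moreover have "\<bar>ip d (query alg (fo_oracle \<delta> d A (trunc i V)) b) (V (i + 1))\<bar> < gam \<delta> d / 4"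
    using unc b_corr i by (auto simp: trunc_run_uncorrelated_def)
  ultimately show False using b_corr by (simp add: correlated_def)
qed

lemma enat_chain_finite:
  fixes f :: "nat \<Rightarrow> enat"
  assumes top: "f N \<noteq> \<infinity>" and chain: "\<And>i. 1 \<le> i \<Longrightarrow> i < N \<Longrightarrow> f (i + 1) \<noteq> \<infinity> \<Longrightarrow> f i < f (i + 1)"
    and i: "i \<in> {1..N}"
  shows "f i \<noteq> \<infinity>"
proof -
  have "i \<le> N" using i by simp
  thus ?thesis
  proof (induction rule: inc_induct)
    case base show ?case by (rule top)
  next
    case (step n)
    have "1 \<le> n" using i step.hyps(1) by simp
    hence "f n < f (n + 1)" using chain step by simp
    thus ?case by (cases "f n") auto
  qed
qed

section \<open>Counting on the sample space\<close>

lemma Vfams_iff: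
  "V \<in> Vfams d N \<longleftrightarrow> (\<forall>i. (1 \<le> i \<and> i \<le> N \<longrightarrow> V i \<in> sign_cube d (1 / sqrt d))
                              \<and> (\<not> (1 \<le> i \<and> i \<le> N) \<longrightarrow> V i = (\<lambda>k. 0)))"
  unfolding Vfams_def sign_cube_def by (auto simp: fun_eq_iff)

lemma Amats_iff:
  "A \<in> Amats d \<longleftrightarrow> (\<forall>j. (j < d div 2 \<longrightarrow> A j \<in> sign_cube d 1) \<and> (\<not> j < d div 2 \<longrightarrow> A j = (\<lambda>k. 0)))"
  unfolding Amats_def sign_cube_def by (auto simp: fun_eq_iff)

lemma finite_functions_vanishing_outside:
  assumes "finite I" "finite S"
  shows "finite {F. (\<forall>i\<in>I. F i \<in> S) \<and> (\<forall>i. i \<notin> I \<longrightarrow> F i = z)}"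
proof -
  have "inj_on (\<lambda>F. restrict F I) {F. (\<forall>i\<in>I. F i \<in> S) \<and> (\<forall>i. i \<notin> I \<longrightarrow> F i = z)}"
  proof (rule inj_onI)
    fix F G
    assume F: "F \<in> {F. (\<forall>i\<in>I. F i \<in> S) \<and> (\<forall>i. i \<notin> I \<longrightarrow> F i = z)}"
      and G: "G \<in> {F. (\<forall>i\<in>I. F i \<in> S) \<and> (\<forall>i. i \<notin> I \<longrightarrow> F i = z)}"
      and e: "restrict F I = restrict G I"
    show "F = G"
    proof
      fix i show "F i = G i" using F G fun_cong[OF e, of i] by (cases "i \<in> I") auto
    qed
  qed
  moreover have "(\<lambda>F. restrict F I) ` {F. (\<forall>i\<in>I. F i \<in> S) \<and> (\<forall>i. i \<notin> I \<longrightarrow> F i = z)} \<subseteq> PiE I (\<lambda>_. S)"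
    by auto
  ultimately show ?thesis
    using assms by (meson finite_PiE finite_imageD finite_subset)
qed

lemma finite_Vfams: "finite (Vfams d N)"
proof -
  have "Vfams d N = {V. (\<forall>i\<in>{1..N}. V i \<in> sign_cube d (1 / sqrt d)) \<and> (\<forall>i. i \<notin> {1..N} \<longrightarrow> V i = (\<lambda>k. 0))}"
    by (auto simp: Vfams_iff)
  thus ?thesis by (simp only: finite_functions_vanishing_outside finite_atLeastAtMost finite_sign_cube)
qed

lemma finite_Amats: "finite (Amats d)"
proof -
  have "Amats d = {A. (\<forall>j\<in>{..<d div 2}. A j \<in> sign_cube d 1) \<and> (\<forall>j. j \<notin> {..<d div 2} \<longrightarrow> A j = (\<lambda>k. 0))}"
    by (auto simp: Amats_iff)
  thus ?thesis by (simp only: finite_functions_vanishing_outside finite_lessThan finite_sign_cube)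
qed

lemma finite_Omega: "finite (Omega \<delta> d)"
  by (simp add: Omega_def finite_Amats finite_Vfams)

lemma card_Vfams_fiber:
  assumes j: "1 \<le> j" "j \<le> N" and V0: "V0 \<in> Vfams d N"
  shows "card {V\<in>Vfams d N. V(j := (\<lambda>k. 0)) = V0(j := (\<lambda>k. 0)) \<and> Q V}
           = card {u\<in>sign_cube d (1 / sqrt d). Q (V0(j := u))}"
proof -
  have "{V\<in>Vfams d N. V(j := (\<lambda>k. 0)) = V0(j := (\<lambda>k. 0)) \<and> Q V}
      = (\<lambda>u. V0(j := u)) ` {u\<in>sign_cube d (1 / sqrt d). Q (V0(j := u))}"
  proof (intro equalityI subsetI)
    fix V assume V: "V \<in> {V\<in>Vfams d N. V(j := (\<lambda>k. 0)) = V0(j := (\<lambda>k. 0)) \<and> Q V}"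
    hence e: "V(j := (\<lambda>k. 0)) = V0(j := (\<lambda>k. 0))" by simp
    have "V = V0(j := V j)"
    proof
      fix i show "V i = (V0(j := V j)) i" using fun_cong[OF e, of i] by (cases "i = j") auto
    qed
    moreover have "V j \<in> sign_cube d (1 / sqrt d)" using V j by (simp add: Vfams_iff)
    ultimately show "V \<in> (\<lambda>u. V0(j := u)) ` {u\<in>sign_cube d (1 / sqrt d). Q (V0(j := u))}"
      using V by (intro image_eqI[of _ _ "V j"]) auto
  next
    fix V assume "V \<in> (\<lambda>u. V0(j := u)) ` {u\<in>sign_cube d (1 / sqrt d). Q (V0(j := u))}"
    thus "V \<in> {V\<in>Vfams d N. V(j := (\<lambda>k. 0)) = V0(j := (\<lambda>k. 0)) \<and> Q V}"
      using V0 j by (auto simp: Vfams_iff)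
  qed
  moreover have "inj_on (\<lambda>u. V0(j := u)) {u\<in>sign_cube d (1 / sqrt d). Q (V0(j := u))}"
    by (rule inj_onI) (metis fun_upd_same)
  ultimately show ?thesis by (simp add: card_image)
qed

text \<open>Conditioning on all vectors but \<open>v\<^sub>j\<close>.\<close>
lemma card_Vfams_le_if_fibers_le:
  assumes j: "1 \<le> j" "j \<le> N" and d: "d > 0"
    and fibers: "\<And>V. V \<in> Vfams d N \<Longrightarrow> real (card {u\<in>sign_cube d (1 / sqrt d). Q (V(j := u))}) \<le> p * 2^d"
  shows "real (card {V\<in>Vfams d N. Q V}) \<le> p * real (card (Vfams d N))"
proof -
  define \<pi> where "\<pi> = (\<lambda>V::nat \<Rightarrow> vec. V(j := (\<lambda>k. 0)))"
  define B where "B = \<pi> ` Vfams d N"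
  have part: "card {V\<in>Vfams d N. R V} = (\<Sum>W\<in>B. card {V\<in>Vfams d N. \<pi> V = W \<and> R V})" for R
  proof -
    have "card {V\<in>Vfams d N. R V} = (\<Sum>V\<in>{V\<in>Vfams d N. R V}. 1)" by simp
    also have "\<dots> = (\<Sum>W\<in>B. \<Sum>V\<in>{x\<in>{V\<in>Vfams d N. R V}. \<pi> x = W}. 1)"
      by (rule sum.group[symmetric]) (use finite_Vfams in \<open>auto simp: B_def\<close>)
    also have "\<dots> = (\<Sum>W\<in>B. card {V\<in>Vfams d N. \<pi> V = W \<and> R V})"
      by (intro sum.cong refl) (simp add: conj_commute conj_left_commute)
    finally show ?thesis .
  qed
  have fiber: "\<exists>V0\<in>Vfams d N. card {V\<in>Vfams d N. \<pi> V = W \<and> R V}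
                 = card {u\<in>sign_cube d (1 / sqrt d). R (V0(j := u))}" if "W \<in> B" for W R
    using that card_Vfams_fiber[OF j] by (auto simp: B_def \<pi>_def)
  have full: "card {V\<in>Vfams d N. \<pi> V = W \<and> True} = 2^d" if "W \<in> B" for W
    using fiber[OF that, of "\<lambda>_. True"] card_sign_cube[of "1 / sqrt d" d] d by auto
  have "real (card {V\<in>Vfams d N. Q V}) = (\<Sum>W\<in>B. real (card {V\<in>Vfams d N. \<pi> V = W \<and> Q V}))"
    by (simp add: part[of Q])
  also have "\<dots> \<le> (\<Sum>W\<in>B. p * 2^d)"
  proof (rule sum_mono)
    fix W assume "W \<in> B"
    then obtain V0 where "V0 \<in> Vfams d N"
      "card {V\<in>Vfams d N. \<pi> V = W \<and> Q V} = card {u\<in>sign_cube d (1 / sqrt d). Q (V0(j := u))}"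
      using fiber[of W Q] by blast
    thus "real (card {V\<in>Vfams d N. \<pi> V = W \<and> Q V}) \<le> p * 2^d" using fibers by simp
  qed
  also have "\<dots> = p * (\<Sum>W\<in>B. real (card {V\<in>Vfams d N. \<pi> V = W \<and> True}))"
  proof -
    have "(\<Sum>W\<in>B. real (card {V\<in>Vfams d N. \<pi> V = W \<and> True})) = (\<Sum>W\<in>B. 2^d)"
      by (intro sum.cong refl) (use full in simp)
    thus ?thesis by (simp add: sum_distrib_left)
  qed
  also have "\<dots> = p * real (card (Vfams d N))" using part[of "\<lambda>_. True"] by simp
  finally show ?thesis .
qed

lemma card_Omega_le_if_fibers_le:
  assumes j: "1 \<le> j" "j \<le> NN \<delta> d" and d: "d > 0"
    and fibers: "\<And>A V. A \<in> Amats d \<Longrightarrow> V \<in> Vfams d (NN \<delta> d) \<Longrightarrow>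
                  real (card {u\<in>sign_cube d (1 / sqrt d). P A (V(j := u))}) \<le> p * 2^d"
  shows "real (card {\<omega>\<in>Omega \<delta> d. P (fst \<omega>) (snd \<omega>)}) \<le> p * real (card (Omega \<delta> d))"
proof -
  have "{\<omega>\<in>Omega \<delta> d. P (fst \<omega>) (snd \<omega>)} = Sigma (Amats d) (\<lambda>A. {V\<in>Vfams d (NN \<delta> d). P A V})"
    by (auto simp: Omega_def)
  hence "real (card {\<omega>\<in>Omega \<delta> d. P (fst \<omega>) (snd \<omega>)})
      = (\<Sum>A\<in>Amats d. real (card {V\<in>Vfams d (NN \<delta> d). P A V}))"
    using finite_Amats finite_Vfams by (simp add: card_SigmaI)
  also have "\<dots> \<le> (\<Sum>A\<in>Amats d. p * real (card (Vfams d (NN \<delta> d))))"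
    by (intro sum_mono card_Vfams_le_if_fibers_le[OF j d]) (use fibers in auto)
  also have "\<dots> = p * real (card (Omega \<delta> d))"
    by (simp add: Omega_def card_cartesian_product)
  finally show ?thesis .
qed

lemma card_sign_cube_abs_ip_ge:
  assumes d: "d > 0" and x: "ip d x x \<le> 1" and t: "t > 0"
  shows "real (card {u\<in>sign_cube d (1 / sqrt d). t \<le> \<bar>ip d x u\<bar>}) \<le> 2 * exp (- real d * t\<^sup>2 / 2) * 2^d"
proof -
  have "real (card {u\<in>sign_cube d (1 / sqrt d). t \<le> \<bar>\<Sum>k<d. x k * u k\<bar>})
        \<le> 2 * 2^d * exp (- t\<^sup>2 / (2 * (1 / sqrt d)\<^sup>2 * 1))"
    by (rule card_sign_cube_linear_abs_ge) (use d t x in \<open>auto simp: ip_def power2_eq_square\<close>)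
  also have "- t\<^sup>2 / (2 * (1 / sqrt d)\<^sup>2 * 1) = - real d * t\<^sup>2 / 2"
    using d by (simp add: power_divide)
  finally show ?thesis by (simp add: ip_def mult_ac)
qed

lemma card_UN_le_real:
  assumes "finite I" "\<And>a. a \<in> I \<Longrightarrow> real (card (S a)) \<le> c"
  shows "real (card (\<Union>a\<in>I. S a)) \<le> real (card I) * c"
proof -
  have "real (card (\<Union>a\<in>I. S a)) \<le> (\<Sum>a\<in>I. real (card (S a)))"
    using card_UN_le[OF assms(1), of S] by (metis of_nat_le_iff of_nat_sum)
  also have "\<dots> \<le> (\<Sum>a\<in>I. c)" by (intro sum_mono assms(2))
  finally show ?thesis by simp
qed

lemma card_Diff_ge_real:
  assumes "finite A" "finite B"
  shows "real (card A) - real (card B) \<le> real (card (A - B))"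
proof -
  have "card A \<le> card (A - B) + card (A \<inter> B)"
    using assms card_Un_le[of "A - B" "A \<inter> B"] by (simp add: Un_Diff_Int)
  moreover have "card (A \<inter> B) \<le> card B"
    using assms(2) by (rule card_mono) simp
  ultimately show ?thesis by linarith
qed

text \<open>The long increments add up to at most \<open>T\<close>, by telescoping.\<close>
lemma card_small_increments:
  fixes a :: "nat \<Rightarrow> real" and N :: nat and T :: real
  assumes N: "N \<ge> 2" and mono: "\<And>i. 1 \<le> i \<Longrightarrow> i \<le> N - 1 \<Longrightarrow> a i \<le> a (i + 1)"
    and a1: "a 1 \<ge> 0" and aN: "a N \<le> T" and T: "T > 0"
  shows "real (card {i\<in>{1..N-1}. a (i + 1) - a i \<le> 20 * T / N}) \<ge> real (N - 1) - real N / 20"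
proof -
  define B where "B = {i\<in>{1..N-1}. a (i + 1) - a i > 20 * T / N}"
  have B_sub: "B \<subseteq> {1..N-1}" by (auto simp: B_def)
  have "real (card B) * (20 * T / N) \<le> T"
  proof -
    have "real (card B) * (20 * T / N) = (\<Sum>i\<in>B. 20 * T / N)" by simp
    also have "\<dots> \<le> (\<Sum>i\<in>B. a (Suc i) - a i)"
      by (intro sum_mono) (auto simp: B_def)
    also have "\<dots> \<le> (\<Sum>i\<in>{1..N-1}. a (Suc i) - a i)"
      by (rule sum_mono2) (use B_sub mono in auto)
    also have "\<dots> = a N - a 1"
      using sum_Suc_diff[of 1 "N - 1" a] N by (simp add: Suc_diff_1)
    finally show ?thesis using a1 aN by simp
  qed
  hence "real (card B) \<le> real N / 20" using T N by (simp add: field_simps)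
  moreover have "{i\<in>{1..N-1}. a (i + 1) - a i \<le> 20 * T / N} = {1..N-1} - B" by (auto simp: B_def)
  ultimately show ?thesis
    using card_Diff_subset[OF finite_subset[OF B_sub] B_sub] card_mono[OF _ B_sub]
    by (simp add: of_nat_diff)
qed

text \<open>Averaging by double counting.\<close>
lemma exists_index_frequent:
  assumes \<Omega>: "finite \<Omega>" "G \<subseteq> \<Omega>" and I: "finite I" "I \<noteq> {}"
    and good: "\<And>\<omega>. \<omega> \<in> G \<Longrightarrow> c \<le> real (card {i\<in>I. P i \<omega>})"
  shows "\<exists>i\<in>I. real (card G) * c \<le> real (card I) * real (card {\<omega>\<in>\<Omega>. P i \<omega>})"
proof (rule ccontr)
  assume contra: "\<not> ?thesis"
  have I0: "real (card I) > 0" using I by (simp add: card_gt_0_iff)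
  have lt: "real (card {\<omega>\<in>\<Omega>. P i \<omega>}) < real (card G) * c / real (card I)" if "i \<in> I" for i
    using contra that I0 by (auto simp: not_le pos_less_divide_eq mult.commute)
  have "real (card G) * c = (\<Sum>\<omega>\<in>G. c)" by simp
  also have "\<dots> \<le> (\<Sum>\<omega>\<in>G. real (card {i\<in>I. P i \<omega>}))" by (rule sum_mono[OF good])
  also have "\<dots> \<le> (\<Sum>\<omega>\<in>\<Omega>. real (card {i\<in>I. P i \<omega>}))"
    using \<Omega> by (intro sum_mono2) auto
  also have "\<dots> = (\<Sum>i\<in>I. real (card {\<omega>\<in>\<Omega>. P i \<omega>}))"
  proof -
    have count: "real (card {x\<in>S. Q x}) = (\<Sum>x\<in>S. if Q x then 1 else 0)" if "finite S" for S Q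
      using that by (simp add: sum.inter_filter[symmetric])
    show ?thesis using \<Omega> I by (simp add: count sum.swap[of _ I])
  qed
  also have "\<dots> < (\<Sum>i\<in>I. real (card G) * c / real (card I))"
    using I lt by (intro sum_strict_mono) auto
  also have "\<dots> = real (card G) * c" using I by simp
  finally show False by simp
qed

lemma prob_ev_split:
  "prob_ev \<delta> d (\<lambda>(A, V). P A V) = real (card {\<omega>\<in>Omega \<delta> d. P (fst \<omega>) (snd \<omega>)}) / real (card (Omega \<delta> d))"
  by (simp add: prob_ev_def split_def)

section \<open>Large dimensions\<close>

text \<open>\<open>sqrt d / d\<^sup>2 = \<sqrt>d L \<epsilon>\<close> is the optimality gap \<open>\<epsilon>\<close> measured in units of the
  unnormalised maximum inside \<open>F\<close>.\<close>
locale large_dimension =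
  fixes \<delta> :: real and d T :: nat
  assumes d_ge_2: "2 \<le> d"
    and NN_ge_20: "20 \<le> NN \<delta> d"
    and gam_pos: "0 < gam \<delta> d" and gam_le_half: "gam \<delta> d \<le> 1/2"
    and NN_gam_le: "real (NN \<delta> d) * gam \<delta> d + sqrt d / (real d)\<^sup>2 \<le> 1 / (9 * sqrt (NN \<delta> d))"
    and gap_less_gam: "sqrt d / (real d)\<^sup>2 < gam \<delta> d"
    and union_bound_span: "real (NN \<delta> d) * (16 / real d) \<le> 1/180"
    and union_bound_cross: "real (NN \<delta> d) * real (NN \<delta> d) * (2 * exp (- real d / (128 * (real (NN \<delta> d))\<^sup>2))) \<le> 1/180"
    and union_bound_trunc: "real (NN \<delta> d) * real (NN \<delta> d) * real T * (2 * exp (- real d * (gam \<delta> d)\<^sup>2 / 32)) \<le> 1/180"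
    and T_pos: "1 \<le> T"

lemma eventually_sequentially_real:
  "eventually P at_top \<Longrightarrow> eventually (\<lambda>n. P (real n)) sequentially"
  using filterlim_real_sequentially unfolding filterlim_iff by blast

lemma real_NN_le: "real (NN \<delta> d) \<le> real d powr (\<delta> / 6) / ln (real d) ^ 4"
proof -
  have "real d powr (\<delta> / 6) / ln (real d) ^ 4 \<ge> 0" by simp
  thus ?thesis by (simp add: NN_def)
qed

lemma eventually_T_bounds:
  assumes \<delta>: "\<delta> < 1" "0 < \<delta>"
    and T: "((\<lambda>d. ln (real (T d)) / ln (real d)) \<longlongrightarrow> 1 + \<delta> / 6) sequentially"
  shows "eventually (\<lambda>d. 1 \<le> T d \<and> real (T d) \<le> (real d)\<^sup>2) sequentially"
proof -
  have "eventually (\<lambda>d. 1 < ln (real (T d)) / ln (real d) \<and> ln (real (T d)) / ln (real d) < 2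
                        \<and> 2 \<le> d) sequentially"
    using order_tendstoD[OF T, of 1] order_tendstoD[OF T, of 2] \<delta>
    by (intro eventually_conj eventually_ge_at_top) auto
  thus ?thesis
  proof (rule eventually_mono, elim conjE)
    fix d assume lo: "1 < ln (real (T d)) / ln (real d)" and hi: "ln (real (T d)) / ln (real d) < 2"
      and d: "2 \<le> d"
    have lnd: "ln (real d) > 0" using d by simp
    hence "ln (real d) < ln (real (T d))" using lo by (simp add: less_divide_eq)
    hence T0: "T d > 0" using lnd by (cases "T d = 0") auto
    have "ln (real (T d)) < ln ((real d)\<^sup>2)" using hi lnd d by (simp add: divide_less_eq ln_realpow)
    thus "1 \<le> T d \<and> real (T d) \<le> (real d)\<^sup>2" using T0 d by simp
  qed
qed

lemma eventually_NN_ge_20: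
  assumes "0 < \<delta>"
  shows "eventually (\<lambda>d. 20 \<le> NN \<delta> d) sequentially"
proof -
  have "filterlim (\<lambda>x::real. x powr (\<delta> / 6) / ln x ^ 4) at_top at_top"
    using assms by real_asymp
  hence "eventually (\<lambda>x::real. 20 \<le> x powr (\<delta> / 6) / ln x ^ 4) at_top"
    by (simp add: filterlim_at_top)
  thus ?thesis
    by (rule eventually_mono[OF eventually_sequentially_real]) (simp add: NN_def le_nat_floor)
qed

lemma eventually_gam_bounds:
  assumes "0 < \<delta>" "\<delta> < 1"
  shows "eventually (\<lambda>d. 0 < gam \<delta> d \<and> gam \<delta> d \<le> 1/2 \<and> sqrt d / (real d)\<^sup>2 < gam \<delta> d) sequentially"
proof -
  have "((\<lambda>x::real. ln x ^ 2 / x powr (\<delta> / 4)) \<longlongrightarrow> 0) at_top"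
    using assms by real_asymp
  hence "eventually (\<lambda>x::real. ln x ^ 2 / x powr (\<delta> / 4) < 1/2) at_top"
    by (rule order_tendstoD(2)) simp
  moreover have "((\<lambda>x::real. (sqrt x / x\<^sup>2) / (ln x ^ 2 / x powr (\<delta> / 4))) \<longlongrightarrow> 0) at_top"
    using assms by real_asymp
  hence "eventually (\<lambda>x::real. (sqrt x / x\<^sup>2) / (ln x ^ 2 / x powr (\<delta> / 4)) < 1) at_top"
    by (rule order_tendstoD(2)) simp
  moreover have "eventually (\<lambda>x::real. 2 \<le> x) at_top" by (rule eventually_ge_at_top)
  ultimately have "eventually (\<lambda>x::real. 2 \<le> x \<and> ln x ^ 2 / x powr (\<delta> / 4) \<le> 1/2
      \<and> (sqrt x / x\<^sup>2) / (ln x ^ 2 / x powr (\<delta> / 4)) < 1) at_top"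
    by eventually_elim auto
  thus ?thesis
  proof (rule eventually_mono[OF eventually_sequentially_real], elim conjE)
    fix d :: nat
    assume d: "2 \<le> real d" and small: "ln (real d) ^ 2 / real d powr (\<delta> / 4) \<le> 1/2"
      and ratio: "(sqrt d / (real d)\<^sup>2) / (ln (real d) ^ 2 / real d powr (\<delta> / 4)) < 1"
    have pos: "0 < ln (real d) ^ 2 / real d powr (\<delta> / 4)" using d by simp
    have "sqrt d / (real d)\<^sup>2 < ln (real d) ^ 2 / real d powr (\<delta> / 4)"
      using ratio pos by (simp only: divide_less_eq_1_pos)
    thus "0 < gam \<delta> d \<and> gam \<delta> d \<le> 1/2 \<and> sqrt d / (real d)\<^sup>2 < gam \<delta> d"
      using small pos by (simp add: gam_def)
  qed
qed

lemma eventually_NN_gam_le: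
  assumes "0 < \<delta>" "\<delta> < 1"
  shows "eventually (\<lambda>d. real (NN \<delta> d) * gam \<delta> d + sqrt d / (real d)\<^sup>2 \<le> 1 / (9 * sqrt (NN \<delta> d)))
           sequentially"
proof -
  define M where "M x = x powr (\<delta> / 6) / ln x ^ 4" for x :: real
  have "((\<lambda>x. 9 * (M x * (ln x ^ 2 / x powr (\<delta> / 4)) + sqrt x / x\<^sup>2) * sqrt (M x)) \<longlongrightarrow> 0) at_top"
    unfolding M_def using assms by real_asymp
  hence "eventually (\<lambda>x. 9 * (M x * (ln x ^ 2 / x powr (\<delta> / 4)) + sqrt x / x\<^sup>2) * sqrt (M x) < 1) at_top"
    by (rule order_tendstoD(2)) simp
  from eventually_sequentially_real[OF this] eventually_NN_ge_20[OF assms(1)] eventually_gam_bounds[OF assms]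
  show ?thesis
  proof (eventually_elim, elim conjE)
    fix d
    assume small: "9 * (M d * (ln (real d) ^ 2 / real d powr (\<delta> / 4)) + sqrt d / (real d)\<^sup>2) * sqrt (M d) < 1"
      and N: "20 \<le> NN \<delta> d" and \<gamma>: "0 < gam \<delta> d"
    have NM: "real (NN \<delta> d) \<le> M d" using real_NN_le by (simp add: M_def)
    have M0: "M d > 0" using NM N by linarith
    have "real (NN \<delta> d) * gam \<delta> d + sqrt d / (real d)\<^sup>2 \<le> M d * gam \<delta> d + sqrt d / (real d)\<^sup>2"
      using NM \<gamma> by (simp add: mult_right_mono)
    also have "\<dots> < 1 / (9 * sqrt (M d))"
      using small M0 by (simp add: gam_def field_simps)
    also have "\<dots> \<le> 1 / (9 * sqrt (NN \<delta> d))"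
      using NM N by (intro divide_left_mono mult_left_mono real_sqrt_le_mono) auto
    finally show "real (NN \<delta> d) * gam \<delta> d + sqrt d / (real d)\<^sup>2 \<le> 1 / (9 * sqrt (NN \<delta> d))"
      by simp
  qed
qed

lemma eventually_union_bound_span:
  assumes "0 < \<delta>" "\<delta> < 1"
  shows "eventually (\<lambda>d. real (NN \<delta> d) * (16 / real d) \<le> 1/180) sequentially"
proof -
  have "((\<lambda>x::real. 16 * (x powr (\<delta> / 6) / ln x ^ 4) / x) \<longlongrightarrow> 0) at_top"
    using assms by real_asymp
  hence "eventually (\<lambda>x::real. 16 * (x powr (\<delta> / 6) / ln x ^ 4) / x < 1/180) at_top"
    by (rule order_tendstoD(2)) simp
  thus ?thesis
  proof (rule eventually_mono[OF eventually_sequentially_real])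
    fix d :: nat assume small: "16 * (real d powr (\<delta> / 6) / ln (real d) ^ 4) / real d < 1/180"
    have "real (NN \<delta> d) * (16 / real d) \<le> (real d powr (\<delta> / 6) / ln (real d) ^ 4) * (16 / real d)"
      using real_NN_le by (rule mult_right_mono) simp
    also have "\<dots> = 16 * (real d powr (\<delta> / 6) / ln (real d) ^ 4) / real d" by simp
    finally show "real (NN \<delta> d) * (16 / real d) \<le> 1/180" using small by linarith
  qed
qed

lemma eventually_union_bound_cross:
  assumes "0 < \<delta>" "\<delta> < 1"
  shows "eventually (\<lambda>d. real (NN \<delta> d) * real (NN \<delta> d) * (2 * exp (- real d / (128 * (real (NN \<delta> d))\<^sup>2)))
           \<le> 1/180) sequentially"
proof -
  define M where "M x = x powr (\<delta> / 6) / ln x ^ 4" for x :: real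
  have "((\<lambda>x. (M x)\<^sup>2 * 2 * exp (- x / (128 * (M x)\<^sup>2))) \<longlongrightarrow> 0) at_top"
    unfolding M_def using assms by real_asymp
  hence "eventually (\<lambda>x. (M x)\<^sup>2 * 2 * exp (- x / (128 * (M x)\<^sup>2)) < 1/180) at_top"
    by (rule order_tendstoD(2)) simp
  from eventually_sequentially_real[OF this] eventually_NN_ge_20[OF assms(1)]
  show ?thesis
  proof (eventually_elim)
    fix d assume small: "(M d)\<^sup>2 * 2 * exp (- real d / (128 * (M d)\<^sup>2)) < 1/180" and N: "20 \<le> NN \<delta> d"
    have NM: "(real (NN \<delta> d))\<^sup>2 \<le> (M d)\<^sup>2"
      using real_NN_le[of \<delta> d] by (intro power_mono) (auto simp: M_def)
    hence "exp (- real d / (128 * (real (NN \<delta> d))\<^sup>2)) \<le> exp (- real d / (128 * (M d)\<^sup>2))"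
      using N by (simp add: frac_le)
    hence "real (NN \<delta> d) * real (NN \<delta> d) * (2 * exp (- real d / (128 * (real (NN \<delta> d))\<^sup>2)))
        \<le> (M d)\<^sup>2 * (2 * exp (- real d / (128 * (M d)\<^sup>2)))"
      using NM by (intro mult_mono) (auto simp: power2_eq_square)
    thus "real (NN \<delta> d) * real (NN \<delta> d) * (2 * exp (- real d / (128 * (real (NN \<delta> d))\<^sup>2))) \<le> 1/180"
      using small by simp
  qed
qed

lemma eventually_union_bound_trunc:
  assumes "0 < \<delta>" "\<delta> < 1" and T: "eventually (\<lambda>d. real (T d) \<le> (real d)\<^sup>2) sequentially"
  shows "eventually (\<lambda>d. real (NN \<delta> d) * real (NN \<delta> d) * real (T d) * (2 * exp (- real d * (gam \<delta> d)\<^sup>2 / 32))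
           \<le> 1/180) sequentially"
proof -
  define M where "M x = x powr (\<delta> / 6) / ln x ^ 4" for x :: real
  have "((\<lambda>x. (M x)\<^sup>2 * x\<^sup>2 * 2 * exp (- x * (ln x ^ 2 / x powr (\<delta> / 4))\<^sup>2 / 32)) \<longlongrightarrow> 0) at_top"
    unfolding M_def using assms by real_asymp
  hence "eventually (\<lambda>x. (M x)\<^sup>2 * x\<^sup>2 * 2 * exp (- x * (ln x ^ 2 / x powr (\<delta> / 4))\<^sup>2 / 32) < 1/180) at_top"
    by (rule order_tendstoD(2)) simp
  from eventually_sequentially_real[OF this] eventually_NN_ge_20[OF assms(1)] T
  show ?thesis
  proof (eventually_elim)
    fix d
    assume small: "(M d)\<^sup>2 * (real d)\<^sup>2 * 2 * exp (- real d * (ln (real d) ^ 2 / real d powr (\<delta> / 4))\<^sup>2 / 32) < 1/180"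
      and N: "20 \<le> NN \<delta> d" and T: "real (T d) \<le> (real d)\<^sup>2"
    have "(real (NN \<delta> d))\<^sup>2 \<le> (M d)\<^sup>2"
      using real_NN_le[of \<delta> d] by (intro power_mono) (auto simp: M_def)
    hence "real (NN \<delta> d) * real (NN \<delta> d) \<le> (M d)\<^sup>2" by (simp add: power2_eq_square)
    hence "real (NN \<delta> d) * real (NN \<delta> d) * real (T d) * (2 * exp (- real d * (gam \<delta> d)\<^sup>2 / 32))
        \<le> (M d)\<^sup>2 * (real d)\<^sup>2 * (2 * exp (- real d * (gam \<delta> d)\<^sup>2 / 32))"
      using T by (intro mult_right_mono mult_mono) auto
    also have "\<dots> = (M d)\<^sup>2 * (real d)\<^sup>2 * 2 * exp (- real d * (ln (real d) ^ 2 / real d powr (\<delta> / 4))\<^sup>2 / 32)"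
      by (simp add: gam_def)
    finally show "real (NN \<delta> d) * real (NN \<delta> d) * real (T d) * (2 * exp (- real d * (gam \<delta> d)\<^sup>2 / 32)) \<le> 1/180"
      using small by linarith
  qed
qed

lemma eventually_large_dimension:
  assumes \<delta>: "0 < \<delta>" "\<delta> < 1"
    and T: "((\<lambda>d. ln (real (T d)) / ln (real d)) \<longlongrightarrow> 1 + \<delta> / 6) sequentially"
  shows "eventually (\<lambda>d. large_dimension \<delta> d (T d)) sequentially"
proof -
  note T_bounds = eventually_T_bounds[OF \<delta>(2,1) T]
  have "eventually (\<lambda>d. real (T d) \<le> (real d)\<^sup>2) sequentially"
    using T_bounds by eventually_elim simp
  from eventually_ge_at_top[of 2] eventually_NN_ge_20[OF \<delta>(1)] eventually_gam_bounds[OF \<delta>]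
    eventually_NN_gam_le[OF \<delta>] eventually_union_bound_span[OF \<delta>] eventually_union_bound_cross[OF \<delta>]
    eventually_union_bound_trunc[OF \<delta> this] T_bounds
  show ?thesis by eventually_elim (simp add: large_dimension_def)
qed

section \<open>Typical instances\<close>

definition row_basis :: "nat \<Rightarrow> (nat \<Rightarrow> vec) \<Rightarrow> vec list" where
  "row_basis d A = Gram_Schmidt d (map A [0..<d div 2])"

lemma row_basis_correct:
  "orthonormal d (length (row_basis d A)) ((!) (row_basis d A))"
  "length (row_basis d A) \<le> d div 2"
  "j < d div 2 \<Longrightarrow> in_span d (row_basis d A) (A j)"
  using Gram_Schmidt_correct[of d "map A [0..<d div 2]"] by (auto simp: row_basis_def)

locale hard_run = large_dimension +
  fixes alg :: "resp list \<Rightarrow> vec"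
  assumes valid: "valid_alg d alg"
begin

lemma d_pos: "d > 0"
  using d_ge_2 by simp

lemma objective_gap:
  assumes "eps_optimal_out \<delta> d T alg A V" and y: "y \<in> unit_ball d"
  defines "x \<equiv> query alg (fo_oracle \<delta> d A V) T"
  shows "max (LL d * Ainf d A x - 1) (vmax \<delta> d V x)
           \<le> max (LL d * Ainf d A y - 1) (vmax \<delta> d V y) + sqrt d / (real d)\<^sup>2"
proof -
  define K where "K = 1 / (sqrt (real d) * LL d)"
  have K: "K > 0" using LL_pos d_pos by (simp add: K_def)
  have "epsopt d = K * (sqrt d / (real d)\<^sup>2)"
    using d_pos LL_pos[of d] by (simp add: epsopt_def K_def power2_eq_square field_simps)
  hence "K * max (LL d * Ainf d A x - 1) (vmax \<delta> d V x)
      \<le> K * (max (LL d * Ainf d A y - 1) (vmax \<delta> d V y) + sqrt d / (real d)\<^sup>2)"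
    using assms by (simp add: eps_optimal_out_def Fhard_def K_def distrib_left)
  thus ?thesis using K by simp
qed

text \<open>A unit vector \<open>y\<close> in the kernel of \<open>A\<close> that is negatively correlated with all \<open>v\<^sub>m\<close>
  makes the optimum so small that an \<open>\<epsilon>\<close>-optimal output must satisfy \<open>\<langle>v\<^sub>N, x\<rangle> \<le> -\<gamma>\<close> and
  \<open>\<parallel>A x\<parallel>\<^sub>\<infinity> < 1/L\<close>; hence \<open>v\<^sub>N\<close> is found at the latest in round \<open>T\<close>.\<close>
lemma corr_time_NN_finite:
  assumes opt: "eps_optimal_out \<delta> d T alg A V"
    and y: "y \<in> unit_ball d" "Ainf d A y = 0"
      "\<And>m. m \<in> {1..NN \<delta> d} \<Longrightarrow> ip d (V m) y \<le> - 1 / (9 * sqrt (NN \<delta> d))"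
  shows "corr_time \<delta> d T alg A V (NN \<delta> d) \<noteq> \<infinity>"
proof -
  define x where "x = query alg (fo_oracle \<delta> d A V) T"
  define B where "B = - 1 / (9 * sqrt (NN \<delta> d)) - gam \<delta> d"
  have N: "1 \<le> NN \<delta> d" using NN_ge_20 by simp
  have "vmax \<delta> d V y \<le> B"
    unfolding B_def using vmax_le_if_ip_le[OF N less_imp_le[OF gam_pos]] y(3) by simp
  moreover have "- 1 \<le> B"
  proof -
    have "1 / (9 * sqrt (NN \<delta> d)) \<le> 1 / 9" using N by (simp add: field_simps)
    thus ?thesis using gam_le_half by (simp add: B_def)
  qed
  ultimately have "max (LL d * Ainf d A y - 1) (vmax \<delta> d V y) \<le> B"
    using y(2) by simp
  hence "max (LL d * Ainf d A x - 1) (vmax \<delta> d V x) \<le> B + sqrt d / (real d)\<^sup>2"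
    using objective_gap[OF opt y(1)] unfolding x_def by linarith
  hence x_bounds: "LL d * Ainf d A x - 1 \<le> B + sqrt d / (real d)\<^sup>2"
    "vmax \<delta> d V x \<le> B + sqrt d / (real d)\<^sup>2"
    by simp_all
  have "vmax \<delta> d V x \<ge> ip d (V (NN \<delta> d)) x - real (NN \<delta> d) * gam \<delta> d"
    unfolding vmax_def using N by (intro Max_ge) auto
  moreover have "0 \<le> 1 / (9 * sqrt (NN \<delta> d))" by simp
  ultimately have A_small: "LL d * Ainf d A x - 1 < 0"
    and V_large: "ip d (V (NN \<delta> d)) x \<le> - gam \<delta> d"
    using x_bounds gap_less_gam NN_gam_le unfolding B_def by linarith+
  have "Ainf d A x \<le> 2 / LL d"
    using A_small LL_pos[of d] by (simp add: field_simps)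
  moreover have "gam \<delta> d / 4 \<le> \<bar>ip d x (V (NN \<delta> d))\<bar>"
    using V_large gam_pos by (simp add: ip_commute[of d x])
  ultimately have "corr_time \<delta> d T alg A V (NN \<delta> d) \<le> enat T"
    using T_pos by (intro corr_time_le_enat) (auto simp: correlated_def x_def)
  thus ?thesis by (cases "corr_time \<delta> d T alg A V (NN \<delta> d)") auto
qed

end

definition short_gap ::
    "real \<Rightarrow> nat \<Rightarrow> nat \<Rightarrow> (resp list \<Rightarrow> vec) \<Rightarrow> (nat \<Rightarrow> nat \<Rightarrow> real) \<Rightarrow> (nat \<Rightarrow> nat \<Rightarrow> real) \<Rightarrow> nat \<Rightarrow> bool"
  where "short_gap \<delta> d T alg A V i \<longleftrightarrow>
    corr_time \<delta> d T alg A V i \<le> corr_time \<delta> d T alg A V (i + 1) \<and>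
    corr_time \<delta> d T alg A V (i + 1) \<le> enat T \<and>
    real (the_enat (corr_time \<delta> d T alg A V (i + 1))) - real (the_enat (corr_time \<delta> d T alg A V i))
      \<le> 20 * real T / real (NN \<delta> d)"

text \<open>The complement of the paper's events \<open>H\<close>: no \<open>v\<^sub>i\<close> has much mass on the row space of \<open>A\<close>,
  and the parts of the \<open>v\<^sub>i\<close> orthogonal to it are almost orthogonal to the other \<open>v\<^sub>j\<close>.\<close>
definition well_spread :: "real \<Rightarrow> nat \<Rightarrow> (nat \<Rightarrow> nat \<Rightarrow> real) \<Rightarrow> (nat \<Rightarrow> nat \<Rightarrow> real) \<Rightarrow> bool" where
  "well_spread \<delta> d A V \<longleftrightarrow>
    (\<forall>i\<in>{1..NN \<delta> d}. (\<Sum>r<length (row_basis d A). (ip d (row_basis d A ! r) (V i))\<^sup>2) \<le> 3/4) \<and>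
    (\<forall>i\<in>{1..NN \<delta> d}. \<forall>j\<in>{1..NN \<delta> d}. i \<noteq> j \<longrightarrow>
       \<bar>ip d (V j) (proj d (row_basis d A) (V i))\<bar> \<le> 1 / (8 * NN \<delta> d))"

context hard_run
begin

lemma exists_kernel_direction:
  assumes V: "V \<in> Vfams d (NN \<delta> d)"
    and spread: "well_spread \<delta> d A V"
  obtains y where "y \<in> unit_ball d" "Ainf d A y = 0"
    "\<And>m. m \<in> {1..NN \<delta> d} \<Longrightarrow> ip d (V m) y \<le> - 1 / (9 * sqrt (NN \<delta> d))"
proof -
  obtain y where y: "\<forall>k\<ge>d. y k = 0" "ip d y y = 1" "\<forall>a. in_span d (row_basis d A) a \<longrightarrow> ip d a y = 0"
      "\<forall>m\<in>{1..NN \<delta> d}. ip d (V m) y \<le> - 1 / (9 * sqrt (NN \<delta> d))"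
  proof (rule good_direction[OF row_basis_correct(1), where N = "NN \<delta> d" and V = V])
    show "1 \<le> NN \<delta> d" using NN_ge_20 by simp
    show "ip d (V i) (V i) = 1" if "i \<in> {1..NN \<delta> d}" for i
      using Vfams_ip_self[OF V _ _ d_pos] that by simp
  qed (use spread that in \<open>auto simp: well_spread_def\<close>)
  have "y \<in> unit_ball d" using y(1,2) by (simp add: unit_ball_def ip_def power2_eq_square)
  moreover have "Ainf d A y = 0"
  proof -
    have "ip d (A j) y = 0" if "j < d div 2" for j
      using y(3) row_basis_correct(3)[OF that] by simp
    hence "(\<lambda>j. \<bar>ip d (A j) y\<bar>) ` {..<d div 2} = (\<lambda>j. 0) ` {..<d div 2}"
      by (intro image_cong) auto
    also have "\<dots> = {0}"
    proof -
      have "0 \<in> {..<d div 2}" using d_ge_2 by simp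
      thus ?thesis by (auto simp: image_constant_conv)
    qed
    finally have "(\<lambda>j. \<bar>ip d (A j) y\<bar>) ` {..<d div 2} = {0}" .
    thus ?thesis by (simp add: Ainf_def)
  qed
  ultimately show thesis using y(4) that by blast
qed

lemma corr_times_increasing:
  assumes V: "V \<in> Vfams d (NN \<delta> d)" and opt: "eps_optimal_out \<delta> d T alg A V"
    and unc: "\<forall>i\<in>{1..NN \<delta> d}. trunc_run_uncorrelated \<delta> d T alg A V i"
    and spread: "well_spread \<delta> d A V"
  shows "i \<in> {1..NN \<delta> d} \<Longrightarrow> corr_time \<delta> d T alg A V i \<noteq> \<infinity>"
    and "1 \<le> i \<Longrightarrow> i < NN \<delta> d \<Longrightarrow> corr_time \<delta> d T alg A V i < corr_time \<delta> d T alg A V (i + 1)"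
proof -
  obtain y where "y \<in> unit_ball d" "Ainf d A y = 0"
    "\<And>m. m \<in> {1..NN \<delta> d} \<Longrightarrow> ip d (V m) y \<le> - 1 / (9 * sqrt (NN \<delta> d))"
    using exists_kernel_direction[OF V spread] by blast
  note top = corr_time_NN_finite[OF opt this]
  have chain: "corr_time \<delta> d T alg A V i < corr_time \<delta> d T alg A V (i + 1)"
    if "1 \<le> i" "i < NN \<delta> d" "corr_time \<delta> d T alg A V (i + 1) \<noteq> \<infinity>" for i
    using that unc by (intro corr_time_less_Suc[OF valid V d_pos gam_pos]) auto
  show fin: "corr_time \<delta> d T alg A V i \<noteq> \<infinity>" if "i \<in> {1..NN \<delta> d}" for i
    by (rule enat_chain_finite[OF top chain that])
  show "1 \<le> i \<Longrightarrow> i < NN \<delta> d \<Longrightarrow> corr_time \<delta> d T alg A V i < corr_time \<delta> d T alg A V (i + 1)"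
    using chain fin by simp
qed

lemma card_short_gap_ge:
  assumes V: "V \<in> Vfams d (NN \<delta> d)" and opt: "eps_optimal_out \<delta> d T alg A V"
    and unc: "\<forall>i\<in>{1..NN \<delta> d}. trunc_run_uncorrelated \<delta> d T alg A V i"
    and spread: "well_spread \<delta> d A V"
  shows "real (NN \<delta> d - 1) - real (NN \<delta> d) / 20
           \<le> real (card {i\<in>{1..NN \<delta> d - 1}. short_gap \<delta> d T alg A V i})"
proof -
  note incr = corr_times_increasing[OF V opt unc spread]
  define a where "a i = real (the_enat (corr_time \<delta> d T alg A V i))" for i
  have mono: "a i \<le> a (i + 1)" if "1 \<le> i" "i \<le> NN \<delta> d - 1" for i
  proof -
    have i: "i \<in> {1..NN \<delta> d}" "i + 1 \<in> {1..NN \<delta> d}" "i < NN \<delta> d"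
      using that NN_ge_20 by auto
    obtain b c where "corr_time \<delta> d T alg A V i = enat b" "corr_time \<delta> d T alg A V (i + 1) = enat c"
      using incr(1)[OF i(1)] incr(1)[OF i(2)] by auto
    thus ?thesis using incr(2)[OF that(1) i(3)] by (simp add: a_def)
  qed
  have le_T: "corr_time \<delta> d T alg A V i \<le> enat T" if "i \<in> {1..NN \<delta> d}" for i
    using incr(1)[OF that] by (rule corr_time_le_T)
  have "a (NN \<delta> d) \<le> real T"
    using le_T[of "NN \<delta> d"] incr(1)[of "NN \<delta> d"] NN_ge_20
    by (cases "corr_time \<delta> d T alg A V (NN \<delta> d)") (auto simp: a_def)
  hence "real (NN \<delta> d - 1) - real (NN \<delta> d) / 20
      \<le> real (card {i\<in>{1..NN \<delta> d - 1}. a (i + 1) - a i \<le> 20 * real T / NN \<delta> d})"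
    using NN_ge_20 mono T_pos by (intro card_small_increments) (auto simp: a_def)
  also have "\<dots> \<le> real (card {i\<in>{1..NN \<delta> d - 1}. short_gap \<delta> d T alg A V i})"
  proof (intro of_nat_mono card_mono subsetI)
    fix i assume "i \<in> {i\<in>{1..NN \<delta> d - 1}. a (i + 1) - a i \<le> 20 * real T / NN \<delta> d}"
    moreover have "i < NN \<delta> d" using NN_ge_20 calculation by auto
    ultimately show "i \<in> {i\<in>{1..NN \<delta> d - 1}. short_gap \<delta> d T alg A V i}"
      using incr(2)[of i] le_T[of "i + 1"] by (auto simp: short_gap_def a_def less_imp_le)
  qed simp
  finally show ?thesis .
qed

end

context hard_run
begin

lemma card_trunc_run_correlated:
  "real (card {\<omega>\<in>Omega \<delta> d. \<exists>i\<in>{1..NN \<delta> d}. \<not> trunc_run_uncorrelated \<delta> d T alg (fst \<omega>) (snd \<omega>) i})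
     \<le> 1/180 * real (card (Omega \<delta> d))"
proof -
  define p where "p = 2 * exp (- real d * (gam \<delta> d)\<^sup>2 / 32)"
  define E where "E i j t = {\<omega>\<in>Omega \<delta> d. i < j \<and>
    gam \<delta> d / 4 \<le> \<bar>ip d (query alg (fo_oracle \<delta> d (fst \<omega>) (trunc i (snd \<omega>))) t) (snd \<omega> j)\<bar>}" for i j t
  have E: "real (card (E i j t)) \<le> p * real (card (Omega \<delta> d))" if "j \<in> {1..NN \<delta> d}" for i j t
    unfolding E_def
  proof (rule card_Omega_le_if_fibers_le[OF _ _ d_pos])
    show "1 \<le> j" "j \<le> NN \<delta> d" using that by auto
    fix A V
    define x where "x = query alg (fo_oracle \<delta> d A (trunc i V)) t"
    have "real (card {u\<in>sign_cube d (1 / sqrt d). gam \<delta> d / 4 \<le> \<bar>ip d x u\<bar>}) \<le> p * 2^d"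
      using card_sign_cube_abs_ip_ge[OF d_pos ip_self_query_le_1[OF valid], of "gam \<delta> d / 4"] gam_pos
      by (simp add: x_def p_def power_divide)
    thus "real (card {u\<in>sign_cube d (1 / sqrt d). i < j \<and>
            gam \<delta> d / 4 \<le> \<bar>ip d (query alg (fo_oracle \<delta> d A (trunc i (V(j := u)))) t) ((V(j := u)) j)\<bar>})
          \<le> p * 2^d"
      by (cases "i < j") (simp_all add: trunc_fun_upd x_def p_def)
  qed
  have "{\<omega>\<in>Omega \<delta> d. \<exists>i\<in>{1..NN \<delta> d}. \<not> trunc_run_uncorrelated \<delta> d T alg (fst \<omega>) (snd \<omega>) i}
      \<subseteq> (\<Union>i\<in>{1..NN \<delta> d}. \<Union>j\<in>{1..NN \<delta> d}. \<Union>t\<in>{1..T}. E i j t)"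
    by (force simp: trunc_run_uncorrelated_def E_def not_less)
  hence "real (card {\<omega>\<in>Omega \<delta> d. \<exists>i\<in>{1..NN \<delta> d}. \<not> trunc_run_uncorrelated \<delta> d T alg (fst \<omega>) (snd \<omega>) i})
      \<le> real (card (\<Union>i\<in>{1..NN \<delta> d}. \<Union>j\<in>{1..NN \<delta> d}. \<Union>t\<in>{1..T}. E i j t))"
    by (intro of_nat_mono card_mono) (auto simp: E_def intro: finite_subset[OF _ finite_Omega])
  also have "\<dots> \<le> real (card {1..NN \<delta> d}) * (real (card {1..NN \<delta> d}) *
      (real (card {1..T}) * (p * real (card (Omega \<delta> d)))))"
    by (intro card_UN_le_real) (auto intro!: E)
  also have "\<dots> = (real (NN \<delta> d) * real (NN \<delta> d) * real T * p) * real (card (Omega \<delta> d))"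
    by (simp add: mult_ac)
  also have "\<dots> \<le> 1/180 * real (card (Omega \<delta> d))"
    using union_bound_trunc by (intro mult_right_mono) (simp_all add: p_def)
  finally show ?thesis .
qed

end

context hard_run
begin

lemma card_span_mass_large:
  "real (card {\<omega>\<in>Omega \<delta> d. \<exists>i\<in>{1..NN \<delta> d}.
      3/4 < (\<Sum>r<length (row_basis d (fst \<omega>)). (ip d (row_basis d (fst \<omega>) ! r) (snd \<omega> i))\<^sup>2)})
     \<le> 1/180 * real (card (Omega \<delta> d))"
proof -
  define E where "E i = {\<omega>\<in>Omega \<delta> d.
    3/4 < (\<Sum>r<length (row_basis d (fst \<omega>)). (ip d (row_basis d (fst \<omega>) ! r) (snd \<omega> i))\<^sup>2)}" for i
  have E: "real (card (E i)) \<le> 16 / real d * real (card (Omega \<delta> d))" if "i \<in> {1..NN \<delta> d}" for i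
    unfolding E_def
  proof (rule card_Omega_le_if_fibers_le[OF _ _ d_pos])
    show "1 \<le> i" "i \<le> NN \<delta> d" using that by auto
    fix A V
    show "real (card {u\<in>sign_cube d (1 / sqrt d).
            3/4 < (\<Sum>r<length (row_basis d A). (ip d (row_basis d A ! r) ((V(i := u)) i))\<^sup>2)})
          \<le> 16 / real d * 2^d"
      using card_sign_cube_sum_square_ip_gt[OF row_basis_correct(1) d_pos] row_basis_correct(2)[of d A] d_pos
      by (simp add: power_divide)
  qed
  have "{\<omega>\<in>Omega \<delta> d. \<exists>i\<in>{1..NN \<delta> d}.
      3/4 < (\<Sum>r<length (row_basis d (fst \<omega>)). (ip d (row_basis d (fst \<omega>) ! r) (snd \<omega> i))\<^sup>2)}
      = (\<Union>i\<in>{1..NN \<delta> d}. E i)"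
    by (auto simp: E_def)
  also have "real (card \<dots>) \<le> real (card {1..NN \<delta> d}) * (16 / real d * real (card (Omega \<delta> d)))"
    by (rule card_UN_le_real[OF _ E]) auto
  also have "\<dots> = (real (NN \<delta> d) * (16 / real d)) * real (card (Omega \<delta> d))"
    by simp
  also have "\<dots> \<le> 1/180 * real (card (Omega \<delta> d))"
    using union_bound_span by (rule mult_right_mono) simp
  finally show ?thesis .
qed

lemma card_cross_large:
  "real (card {\<omega>\<in>Omega \<delta> d. \<exists>i\<in>{1..NN \<delta> d}. \<exists>j\<in>{1..NN \<delta> d}. i \<noteq> j \<and>
      1 / (8 * NN \<delta> d) < \<bar>ip d (snd \<omega> j) (proj d (row_basis d (fst \<omega>)) (snd \<omega> i))\<bar>})
     \<le> 1/180 * real (card (Omega \<delta> d))"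
proof -
  define p where "p = 2 * exp (- real d / (128 * (real (NN \<delta> d))\<^sup>2))"
  define E where "E i j = {\<omega>\<in>Omega \<delta> d. i \<noteq> j \<and>
    1 / (8 * NN \<delta> d) < \<bar>ip d (snd \<omega> j) (proj d (row_basis d (fst \<omega>)) (snd \<omega> i))\<bar>}" for i j
  have E: "real (card (E i j)) \<le> p * real (card (Omega \<delta> d))"
    if "i \<in> {1..NN \<delta> d}" "j \<in> {1..NN \<delta> d}" for i j
    unfolding E_def
  proof (rule card_Omega_le_if_fibers_le[OF _ _ d_pos])
    show "1 \<le> j" "j \<le> NN \<delta> d" using that by auto
    fix A V assume V: "V \<in> Vfams d (NN \<delta> d)"
    define x where "x = proj d (row_basis d A) (V i)"
    have "ip d x x \<le> ip d (V i) (V i)" unfolding x_def by (rule ip_self_proj_le[OF row_basis_correct(1)])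
    also have "\<dots> = 1" using Vfams_ip_self[OF V _ _ d_pos] that(1) by simp
    finally have x: "ip d x x \<le> 1" .
    have "{u\<in>sign_cube d (1 / sqrt d). i \<noteq> j \<and> 1 / (8 * NN \<delta> d) < \<bar>ip d ((V(j := u)) j) (proj d (row_basis d A) ((V(j := u)) i))\<bar>}
        \<subseteq> {u\<in>sign_cube d (1 / sqrt d). 1 / (8 * NN \<delta> d) \<le> \<bar>ip d x u\<bar>}"
      by (auto simp: x_def ip_commute)
    hence "real (card {u\<in>sign_cube d (1 / sqrt d). i \<noteq> j \<and> 1 / (8 * NN \<delta> d) < \<bar>ip d ((V(j := u)) j) (proj d (row_basis d A) ((V(j := u)) i))\<bar>})
        \<le> real (card {u\<in>sign_cube d (1 / sqrt d). 1 / (8 * NN \<delta> d) \<le> \<bar>ip d x u\<bar>})"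
      by (intro of_nat_mono card_mono) auto
    also have "\<dots> \<le> p * 2^d"
      using card_sign_cube_abs_ip_ge[OF d_pos x, of "1 / (8 * NN \<delta> d)"] NN_ge_20
      by (simp add: p_def power_divide power_mult_distrib)
    finally show "real (card {u\<in>sign_cube d (1 / sqrt d). i \<noteq> j \<and> 1 / (8 * NN \<delta> d) < \<bar>ip d ((V(j := u)) j) (proj d (row_basis d A) ((V(j := u)) i))\<bar>})
        \<le> p * 2^d" .
  qed
  have "{\<omega>\<in>Omega \<delta> d. \<exists>i\<in>{1..NN \<delta> d}. \<exists>j\<in>{1..NN \<delta> d}. i \<noteq> j \<and>
      1 / (8 * NN \<delta> d) < \<bar>ip d (snd \<omega> j) (proj d (row_basis d (fst \<omega>)) (snd \<omega> i))\<bar>}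
      = (\<Union>i\<in>{1..NN \<delta> d}. \<Union>j\<in>{1..NN \<delta> d}. E i j)"
    by (auto simp: E_def)
  also have "real (card \<dots>) \<le> real (card {1..NN \<delta> d}) * (real (card {1..NN \<delta> d}) * (p * real (card (Omega \<delta> d))))"
    by (intro card_UN_le_real) (auto intro!: E)
  also have "\<dots> = (real (NN \<delta> d) * real (NN \<delta> d) * p) * real (card (Omega \<delta> d))"
    by (simp add: mult_ac)
  also have "\<dots> \<le> 1/180 * real (card (Omega \<delta> d))"
    using union_bound_cross by (intro mult_right_mono) (simp_all add: p_def)
  finally show ?thesis .
qed

end

context hard_run
begin

lemma card_typical_ge:
  assumes "prob_ev \<delta> d (\<lambda>(A, V). eps_optimal_out \<delta> d T alg A V) \<ge> 2 / 3"
  shows "13/20 * real (card (Omega \<delta> d)) \<le> real (card {\<omega>\<in>Omega \<delta> d.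
           eps_optimal_out \<delta> d T alg (fst \<omega>) (snd \<omega>)
           \<and> (\<forall>i\<in>{1..NN \<delta> d}. trunc_run_uncorrelated \<delta> d T alg (fst \<omega>) (snd \<omega>) i)
           \<and> well_spread \<delta> d (fst \<omega>) (snd \<omega>)})"
proof -
  let ?\<Omega> = "Omega \<delta> d"
  define Opt where "Opt = {\<omega>\<in>?\<Omega>. eps_optimal_out \<delta> d T alg (fst \<omega>) (snd \<omega>)}"
  define B1 where "B1 = {\<omega>\<in>?\<Omega>. \<exists>i\<in>{1..NN \<delta> d}. \<not> trunc_run_uncorrelated \<delta> d T alg (fst \<omega>) (snd \<omega>) i}"
  define B2 where "B2 = {\<omega>\<in>?\<Omega>. \<exists>i\<in>{1..NN \<delta> d}.
      3/4 < (\<Sum>r<length (row_basis d (fst \<omega>)). (ip d (row_basis d (fst \<omega>) ! r) (snd \<omega> i))\<^sup>2)}"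
  define B3 where "B3 = {\<omega>\<in>?\<Omega>. \<exists>i\<in>{1..NN \<delta> d}. \<exists>j\<in>{1..NN \<delta> d}. i \<noteq> j \<and>
      1 / (8 * NN \<delta> d) < \<bar>ip d (snd \<omega> j) (proj d (row_basis d (fst \<omega>)) (snd \<omega> i))\<bar>}"
  have fin: "finite S" if "S \<subseteq> ?\<Omega>" for S using finite_subset[OF that finite_Omega] .
  have "card ?\<Omega> \<noteq> 0"
  proof
    assume "card ?\<Omega> = 0"
    with assms show False by (simp add: prob_ev_def)
  qed
  hence "2/3 * real (card ?\<Omega>) \<le> real (card Opt)"
    using assms by (simp add: prob_ev_split Opt_def field_simps)
  moreover have "real (card Opt) - real (card B1) - real (card B2) - real (card B3)
      \<le> real (card (Opt - B1 - B2 - B3))"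
    using card_Diff_ge_real[of Opt B1] card_Diff_ge_real[of "Opt - B1" B2]
      card_Diff_ge_real[of "Opt - B1 - B2" B3] fin
    by (force simp: Opt_def B1_def B2_def B3_def)
  moreover have "Opt - B1 - B2 - B3 = {\<omega>\<in>?\<Omega>. eps_optimal_out \<delta> d T alg (fst \<omega>) (snd \<omega>)
      \<and> (\<forall>i\<in>{1..NN \<delta> d}. trunc_run_uncorrelated \<delta> d T alg (fst \<omega>) (snd \<omega>) i)
      \<and> well_spread \<delta> d (fst \<omega>) (snd \<omega>)}"
    unfolding Opt_def B1_def B2_def B3_def well_spread_def not_less[symmetric] by blast
  moreover have "real (card B1) \<le> 1/180 * real (card ?\<Omega>)"
    unfolding B1_def by (rule card_trunc_run_correlated)
  moreover have "real (card B2) \<le> 1/180 * real (card ?\<Omega>)"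
    unfolding B2_def by (rule card_span_mass_large)
  moreover have "real (card B3) \<le> 1/180 * real (card ?\<Omega>)"
    unfolding B3_def by (rule card_cross_large)
  ultimately show ?thesis by simp
qed

lemma exists_index_short_gap:
  assumes opt: "prob_ev \<delta> d (\<lambda>(A, V). eps_optimal_out \<delta> d T alg A V) \<ge> 2 / 3"
  shows "\<exists>i\<in>{1..NN \<delta> d - 1}. prob_ev \<delta> d (\<lambda>(A, V). short_gap \<delta> d T alg A V i) \<ge> 3 / 5"
proof -
  define N where "N = NN \<delta> d"
  define c where "c = real (N - 1) - real N / 20"
  define G where "G = {\<omega>\<in>Omega \<delta> d. eps_optimal_out \<delta> d T alg (fst \<omega>) (snd \<omega>)
           \<and> (\<forall>i\<in>{1..N}. trunc_run_uncorrelated \<delta> d T alg (fst \<omega>) (snd \<omega>) i)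
           \<and> well_spread \<delta> d (fst \<omega>) (snd \<omega>)}"
  have N: "20 \<le> N" using NN_ge_20 by (simp add: N_def)
  have "\<exists>i\<in>{1..N - 1}. real (card G) * c
      \<le> real (card {1..N - 1}) * real (card {\<omega>\<in>Omega \<delta> d. short_gap \<delta> d T alg (fst \<omega>) (snd \<omega>) i})"
  proof (rule exists_index_frequent[OF finite_Omega])
    show "G \<subseteq> Omega \<delta> d" "finite {1..N - 1}" "{1..N - 1} \<noteq> {}"
      using N by (auto simp: G_def)
    fix \<omega> assume "\<omega> \<in> G"
    thus "c \<le> real (card {i\<in>{1..N - 1}. short_gap \<delta> d T alg (fst \<omega>) (snd \<omega>) i})"
      unfolding c_def N_def G_def by (intro card_short_gap_ge) (auto simp: Omega_def)
  qed
  then obtain i where i: "i \<in> {1..N - 1}" and freq: "real (card G) * c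
      \<le> real (N - 1) * real (card {\<omega>\<in>Omega \<delta> d. short_gap \<delta> d T alg (fst \<omega>) (snd \<omega>) i})"
    by auto
  have "real (N - 1) * (3/5 * real (card (Omega \<delta> d))) = 3/5 * real (N - 1) * real (card (Omega \<delta> d))"
    by simp
  also have "\<dots> \<le> 13/20 * c * real (card (Omega \<delta> d))"
    using N by (intro mult_right_mono) (simp_all add: c_def of_nat_diff)
  also have "\<dots> = c * (13/20 * real (card (Omega \<delta> d)))" by simp
  also have "\<dots> \<le> c * real (card G)"
    using card_typical_ge[OF opt] N by (intro mult_left_mono) (simp_all add: G_def N_def c_def of_nat_diff)
  also have "\<dots> \<le> real (N - 1) * real (card {\<omega>\<in>Omega \<delta> d. short_gap \<delta> d T alg (fst \<omega>) (snd \<omega>) i})"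
    using freq by (simp add: mult.commute)
  finally have "real (N - 1) * (3/5 * real (card (Omega \<delta> d)))
      \<le> real (N - 1) * real (card {\<omega>\<in>Omega \<delta> d. short_gap \<delta> d T alg (fst \<omega>) (snd \<omega>) i})" .
  hence "3/5 * real (card (Omega \<delta> d)) \<le> real (card {\<omega>\<in>Omega \<delta> d. short_gap \<delta> d T alg (fst \<omega>) (snd \<omega>) i})"
    using N by (simp add: of_nat_diff)
  moreover have "card (Omega \<delta> d) \<noteq> 0"
  proof
    assume "card (Omega \<delta> d) = 0"
    with opt show False by (simp add: prob_ev_def)
  qed
  ultimately show ?thesis
    using i by (intro bexI[of _ i]) (auto simp: prob_ev_split N_def field_simps)
qed

end

theorem lemma4p5:
  fixes \<delta> :: real and T :: "nat \<Rightarrow> nat"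
  assumes "0 < \<delta>" and "\<delta> < 1"
    and "((\<lambda>d. ln (real (T d)) / ln (real d)) \<longlongrightarrow> 1 + \<delta> / 6) sequentially"
  shows "\<exists>d0. \<forall>d \<ge> d0. even d \<longrightarrow>
           (\<forall>alg. valid_alg d alg \<and>
                  prob_ev \<delta> d (\<lambda>(A, V). eps_optimal_out \<delta> d (T d) alg A V) \<ge> 2 / 3 \<longrightarrow>
              (\<exists>i \<in> {1..NN \<delta> d - 1}.
                 prob_ev \<delta> d (\<lambda>(A, V).
                    corr_time \<delta> d (T d) alg A V i \<le> corr_time \<delta> d (T d) alg A V (i + 1) \<and>
                    corr_time \<delta> d (T d) alg A V (i + 1) \<le> enat (T d) \<and>
                    real (the_enat (corr_time \<delta> d (T d) alg A V (i + 1)))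
                      - real (the_enat (corr_time \<delta> d (T d) alg A V i))
                      \<le> 20 * real (T d) / real (NN \<delta> d)) \<ge> 3 / 5))"
proof -
  obtain d0 where d0: "\<And>d. d \<ge> d0 \<Longrightarrow> large_dimension \<delta> d (T d)"
    using eventually_large_dimension[OF assms] by (auto simp: eventually_sequentially)
  have "\<exists>i\<in>{1..NN \<delta> d - 1}. prob_ev \<delta> d (\<lambda>(A, V). short_gap \<delta> d (T d) alg A V i) \<ge> 3 / 5"
    if "d \<ge> d0" "valid_alg d alg" "prob_ev \<delta> d (\<lambda>(A, V). eps_optimal_out \<delta> d (T d) alg A V) \<ge> 2 / 3"
    for d alg
  proof -
    interpret hard_run \<delta> d "T d" alg
      using that d0 by (intro hard_run.intro hard_run_axioms.intro)
    show ?thesis by (rule exists_index_short_gap[OF that(3)])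
  qed
  thus ?thesis unfolding short_gap_def by blast
qed

end
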